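(* Let $K\subset\Gamma_r\cup\partial\Gamma_1$ be compact. Then $\rho_0$ is bounded on $K$ for every choice of switching rates $\lambda_0,\lambda_1>0$.
   Context: Fix $\alpha>\beta>0$ and $\lambda_0,\lambda_1>0$. For $i\in\{0,1\}$ let $u_i(x_1,x_2)=(-\alpha(x_1-i),-\beta(x_2-i))$, with flow $\Phi_i^t(x_1,x_2)=(i+(x_1-i)e^{-\alpha t},\, i+(x_2-i)e^{-\beta t})$. Let $(I_t)$ be a continuous-time Markov chain on $\{0,1\}$ jumping $0\to1$ at rate $\lambda_0$ and $1\to0$ at rate $\lambda_1$, and $X_t$ solve $\frac{d}{dt}X_t=u_{I_t}(X_t)$. The process $(X_t,I_t)$ has a unique invariant probability measure $\mu$, absolutely continuous w.r.t. Lebesgue times counting measure; $\rho_0$ is the Lebesgue density of $\mu(\cdot\times\{0\})$. Let $\Gamma=\{(x_1,x_2): 0\le x_2\le1,\ x_2^{\alpha/\beta}\le x_1\le 1-(1-x_2)^{\alpha/\beta}\}$, $\Gamma^\circ$ its interior, $\Gamma_r=\{x\in\Gamma^\circ:x_1>x_2\}$, and $\partial\Gamma_1=\{\Phi_1^t(0,0):t>0\}$. "$\rho_0$ is bounded on $K$" means some representative of $\rho_0$ is bounded on $K$. *)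

theory Defs
  imports "HOL-Analysis.Analysis" "HOL-Probability.Probability"
begin

text \<open>Flow of the vector field u_i(x1,x2) = (-alpha (x1 - i), -beta (x2 - i)), i in {0,1}.\<close>
definition pdmp_flow :: "real \<Rightarrow> real \<Rightarrow> nat \<Rightarrow> real \<Rightarrow> real \<times> real \<Rightarrow> real \<times> real" where
  "pdmp_flow \<alpha> \<beta> i t x =
     (real i + (fst x - real i) * exp (- \<alpha> * t), real i + (snd x - real i) * exp (- \<beta> * t))"

definition pdmp_rate :: "real \<Rightarrow> real \<Rightarrow> nat \<Rightarrow> real" where
  "pdmp_rate l0 l1 j = (if j = 0 then l0 else l1)"

definition pdmp_mode :: "nat \<Rightarrow> nat \<Rightarrow> nat" where
  "pdmp_mode i k = (i + k) mod 2"

text \<open>k-th holding time, obtained from the k-th Exp(1) sample of \<omega>: Exp(1)/rate ~ Exp(rate).\<close>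
definition pdmp_hold :: "real \<Rightarrow> real \<Rightarrow> nat \<Rightarrow> real stream \<Rightarrow> nat \<Rightarrow> real" where
  "pdmp_hold l0 l1 i \<omega> k = snth \<omega> k / pdmp_rate l0 l1 (pdmp_mode i k)"

definition pdmp_jump_time :: "real \<Rightarrow> real \<Rightarrow> nat \<Rightarrow> real stream \<Rightarrow> nat \<Rightarrow> real" where
  "pdmp_jump_time l0 l1 i \<omega> k = (\<Sum>j<k. pdmp_hold l0 l1 i \<omega> j)"

fun pdmp_pos :: "real \<Rightarrow> real \<Rightarrow> real \<Rightarrow> real \<Rightarrow> real \<times> real \<Rightarrow> nat \<Rightarrow> real stream \<Rightarrow> nat \<Rightarrow> real \<times> real" where
  "pdmp_pos \<alpha> \<beta> l0 l1 x i \<omega> 0 = x"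
| "pdmp_pos \<alpha> \<beta> l0 l1 x i \<omega> (Suc k) =
     pdmp_flow \<alpha> \<beta> (pdmp_mode i k) (pdmp_hold l0 l1 i \<omega> k) (pdmp_pos \<alpha> \<beta> l0 l1 x i \<omega> k)"

text \<open>State (X_t, I_t) at time t of the process started at (x,i), driven by the
  Exp(1) samples \<omega>.  (Off the null event where jump times do not go to infinity.)\<close>
definition pdmp_state :: "real \<Rightarrow> real \<Rightarrow> real \<Rightarrow> real \<Rightarrow> real \<Rightarrow> (real \<times> real) \<times> nat \<Rightarrow> real stream \<Rightarrow> (real \<times> real) \<times> nat" where
  "pdmp_state \<alpha> \<beta> l0 l1 t z \<omega> =
     (let x = fst z; i = snd z;
          k = (LEAST k. t < pdmp_jump_time l0 l1 i \<omega> (Suc k))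
      in (pdmp_flow \<alpha> \<beta> (pdmp_mode i k) (t - pdmp_jump_time l0 l1 i \<omega> k) (pdmp_pos \<alpha> \<beta> l0 l1 x i \<omega> k),
          pdmp_mode i k))"

definition exp_samples :: "real stream measure" where
  "exp_samples = stream_space (density lborel (\<lambda>x. ennreal (exponential_density 1 x)))"

definition pdmp_kernel :: "real \<Rightarrow> real \<Rightarrow> real \<Rightarrow> real \<Rightarrow> real \<Rightarrow> (real \<times> real) \<times> nat \<Rightarrow> ((real \<times> real) \<times> nat) set \<Rightarrow> ennreal" where
  "pdmp_kernel \<alpha> \<beta> l0 l1 t z A =
     emeasure exp_samples {\<omega> \<in> space exp_samples. pdmp_state \<alpha> \<beta> l0 l1 t z \<omega> \<in> A}"

definition pdmp_invariant :: "real \<Rightarrow> real \<Rightarrow> real \<Rightarrow> real \<Rightarrow> ((real \<times> real) \<times> nat) measure \<Rightarrow> bool" where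
  "pdmp_invariant \<alpha> \<beta> l0 l1 \<mu> \<longleftrightarrow>
     prob_space \<mu> \<and> sets \<mu> = sets (borel \<Otimes>\<^sub>M count_space {0, 1}) \<and>
     (\<forall>t\<ge>0. \<forall>A\<in>sets \<mu>. emeasure \<mu> A = (\<integral>\<^sup>+ z. pdmp_kernel \<alpha> \<beta> l0 l1 t z A \<partial>\<mu>))"

definition is_density0 :: "((real \<times> real) \<times> nat) measure \<Rightarrow> (real \<times> real \<Rightarrow> real) \<Rightarrow> bool" where
  "is_density0 \<mu> \<rho> \<longleftrightarrow> \<rho> \<in> borel_measurable lborel \<and> (\<forall>x. 0 \<le> \<rho> x) \<and>
     (\<forall>A\<in>sets lborel. emeasure \<mu> (A \<times> {0}) = (\<integral>\<^sup>+ x\<in>A. ennreal (\<rho> x) \<partial>lborel))"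

definition Gamma :: "real \<Rightarrow> real \<Rightarrow> (real \<times> real) set" where
  "Gamma \<alpha> \<beta> = {(x1, x2). 0 \<le> x2 \<and> x2 \<le> 1 \<and> x2 powr (\<alpha> / \<beta>) \<le> x1 \<and>
                            x1 \<le> 1 - (1 - x2) powr (\<alpha> / \<beta>)}"

definition Gamma_r :: "real \<Rightarrow> real \<Rightarrow> (real \<times> real) set" where
  "Gamma_r \<alpha> \<beta> = {x \<in> interior (Gamma \<alpha> \<beta>). fst x > snd x}"

definition boundary_Gamma1 :: "real \<Rightarrow> real \<Rightarrow> (real \<times> real) set" where
  "boundary_Gamma1 \<alpha> \<beta> = {pdmp_flow \<alpha> \<beta> 1 t (0, 0) | t. t > 0}"

end

theory Submission
  imports Defs
begin

text \<open>
  By invariance, \<open>\<mu> (B \<times> {0}) = \<integral> P\<^sub>t(z, B \<times> {0}) d\<mu>(z)\<close> for every \<open>t \<ge> 0\<close>.  Since the excess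
  \<open>max 0 (x\<^sub>1 - 1)\<close> contracts like \<open>exp (-\<alpha> t)\<close> along both flows, \<open>\<mu>\<close> lives on \<open>x\<^sub>1 \<le> 1\<close>.  A compact
  \<open>K \<subseteq> \<Gamma>\<^sub>r \<union> \<partial>\<Gamma>\<^sub>1\<close> lies in a wedge \<open>\<delta> \<le> y\<^sub>2, y\<^sub>2 + \<delta> \<le> y\<^sub>1 \<le> 1\<close>, which for large \<open>t\<close> can only be
  visited in mode 0 after a switch from mode 1.  The time \<open>a\<close> spent in mode 1 before the switch
  has density at most \<open>\<lambda>\<^sub>1\<close>, and the map \<open>(a, b) \<mapsto> \<Phi>\<^sub>0\<^sup>b (\<Phi>\<^sub>1\<^sup>a x)\<close> has Jacobian at least
  \<open>\<alpha> \<beta> \<delta>\<^sup>3\<close> on the wedge.  Hence the visits during \<open>t \<in> [s, s+1]\<close> that follow the \<open>n\<close>-th jump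
  have expected duration at most \<open>\<lambda>\<^sub>1 / (\<alpha> \<beta> \<delta>\<^sup>3) Leb(B) E[exp (s + 1 - T\<^sub>n)]\<close>, and as \<open>E[exp (-T\<^sub>n)]\<close>
  decays geometrically, averaging the invariance identity over \<open>[s, s+1]\<close> gives
  \<open>\<mu> (B \<times> {0}) \<le> c Leb(B)\<close> for all Borel \<open>B \<subseteq> K\<close>.
\<close>

section \<open>Measure-theoretic estimates\<close>

lemma nn_integral_exp_le:
  fixes g :: "real \<Rightarrow> ennreal"
  assumes c: "0 < c" and \<delta>: "0 < \<delta>" "\<delta> \<le> 1" and [measurable]: "g \<in> borel_measurable borel"
    and supp: "\<And>y. y \<notin> {\<delta>..1} \<Longrightarrow> g y = 0"
  shows "(\<integral>\<^sup>+u. g (exp (c * u)) \<partial>lborel) \<le> ennreal (1 / (c * \<delta>)) * (\<integral>\<^sup>+y. g y \<partial>lborel)"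
proof -
  define a where "a = ln \<delta> / c - 1"
  have "ln \<delta> / c \<le> 0" using \<delta> c by (simp add: divide_nonpos_pos)
  then have a: "a < 0" by (simp add: a_def)
  have "g (exp (c * u)) \<le> ennreal (1 / (c * \<delta>)) * (g (exp (c * u)) * ennreal (c * exp (c * u)) * indicator {a..0} u)"
    for u
  proof (cases "exp (c * u) \<in> {\<delta>..1}")
    case True
    have "u \<le> 0" using True c by (simp add: mult_le_0_iff)
    moreover have "ln \<delta> \<le> c * u" using ln_mono[of \<delta> "exp (c * u)"] True \<delta> by simp
    then have "ln \<delta> / c \<le> u" using c by (simp add: divide_le_eq mult.commute)
    then have "a \<le> u" by (simp add: a_def)
    moreover have "1 \<le> 1 / (c * \<delta>) * (c * exp (c * u))" using True c \<delta> by (simp add: field_simps)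
    then have "g (exp (c * u)) * 1 \<le> g (exp (c * u)) * (ennreal (1 / (c * \<delta>)) * ennreal (c * exp (c * u)))"
      using c \<delta> by (intro mult_left_mono) (simp_all add: ennreal_mult[symmetric])
    ultimately show ?thesis by (simp add: indicator_def mult_ac)
  qed (simp add: supp)
  then have "(\<integral>\<^sup>+u. g (exp (c * u)) \<partial>lborel)
      \<le> ennreal (1 / (c * \<delta>)) * (\<integral>\<^sup>+u. g (exp (c * u)) * ennreal (c * exp (c * u)) * indicator {a..0} u \<partial>lborel)"
    by (subst nn_integral_cmult[symmetric]) (measurable, rule nn_integral_mono)
  also have "(\<integral>\<^sup>+u. g (exp (c * u)) * ennreal (c * exp (c * u)) * indicator {a..0} u \<partial>lborel)
      = (\<integral>\<^sup>+y. g y * indicator {exp (c * a)..exp (c * 0)} y \<partial>lborel)"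
    using a c
    by (intro nn_integral_substitution_aux[symmetric, where g = "\<lambda>u. exp (c * u)" and g' = "\<lambda>u. c * exp (c * u)"])
       (auto intro!: derivative_eq_intros continuous_intros)
  also have "\<dots> \<le> (\<integral>\<^sup>+y. g y \<partial>lborel)"
    by (intro nn_integral_mono) (auto simp: indicator_def)
  finally show ?thesis by (simp add: mult_left_mono)
qed

text \<open>Lebesgue measure in the coordinates \<open>y = (exp (\<alpha> \<sigma>), exp (\<beta> (\<theta> + \<sigma>)))\<close>, whose Jacobian
  \<open>\<alpha> \<beta> y\<^sub>1 y\<^sub>2\<close> is at least \<open>\<alpha> \<beta> \<delta>\<^sup>2\<close> on \<open>[\<delta>, 1]\<^sup>2\<close>.\<close>
lemma nn_integral_indicator_exp_coords_le:
  fixes \<alpha> \<beta> \<delta> :: real and B :: "(real \<times> real) set"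
  assumes \<alpha>\<beta>: "0 < \<alpha>" "0 < \<beta>" and \<delta>: "0 < \<delta>" "\<delta> \<le> 1"
    and B[measurable]: "B \<in> sets borel" and B_sub: "B \<subseteq> {\<delta>..1} \<times> {\<delta>..1}"
  shows "(\<integral>\<^sup>+\<sigma>. (\<integral>\<^sup>+\<theta>. indicator B (exp (\<alpha> * \<sigma>), exp (\<beta> * (\<theta> + \<sigma>))) \<partial>lborel) \<partial>lborel)
    \<le> ennreal (1 / (\<alpha> * \<beta> * \<delta>\<^sup>2)) * emeasure lborel B"
proof -
  have B': "B \<in> sets (lborel \<Otimes>\<^sub>M lborel)" unfolding lborel_prod by simp
  have [measurable]: "Pair y1 -` B \<in> sets borel" for y1 by (metis B borel_prod sets_Pair1)
  have [measurable]: "(\<lambda>y1. emeasure lborel (Pair y1 -` B)) \<in> borel_measurable borel"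
    using lborel.measurable_emeasure_Pair[OF B'] by simp
  have "(\<integral>\<^sup>+\<theta>. indicator B (exp (\<alpha> * \<sigma>), exp (\<beta> * (\<theta> + \<sigma>))) \<partial>lborel)
      \<le> ennreal (1 / (\<beta> * \<delta>)) * emeasure lborel (Pair (exp (\<alpha> * \<sigma>)) -` B)" for \<sigma>
  proof -
    have "(\<integral>\<^sup>+\<theta>. indicator B (exp (\<alpha> * \<sigma>), exp (\<beta> * (\<theta> + \<sigma>))) \<partial>lborel)
        = (\<integral>\<^sup>+\<rho>. indicator (Pair (exp (\<alpha> * \<sigma>)) -` B) (exp (\<beta> * \<rho>)) \<partial>lborel)"
      using nn_integral_real_affine[of "\<lambda>\<rho>. indicator (Pair (exp (\<alpha> * \<sigma>)) -` B) (exp (\<beta> * \<rho>))" 1 \<sigma>]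
      by (simp add: add.commute indicator_def)
    also have "\<dots> \<le> ennreal (1 / (\<beta> * \<delta>)) * (\<integral>\<^sup>+y2. indicator (Pair (exp (\<alpha> * \<sigma>)) -` B) y2 \<partial>lborel)"
      using B_sub \<alpha>\<beta> \<delta> by (intro nn_integral_exp_le) (auto simp: indicator_def)
    finally show ?thesis by simp
  qed
  then have "(\<integral>\<^sup>+\<sigma>. (\<integral>\<^sup>+\<theta>. indicator B (exp (\<alpha> * \<sigma>), exp (\<beta> * (\<theta> + \<sigma>))) \<partial>lborel) \<partial>lborel)
      \<le> ennreal (1 / (\<beta> * \<delta>)) * (\<integral>\<^sup>+\<sigma>. emeasure lborel (Pair (exp (\<alpha> * \<sigma>)) -` B) \<partial>lborel)"
    by (subst nn_integral_cmult[symmetric]) (measurable, intro nn_integral_mono)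
  also have "\<dots> \<le> ennreal (1 / (\<beta> * \<delta>)) * (ennreal (1 / (\<alpha> * \<delta>)) * (\<integral>\<^sup>+y1. emeasure lborel (Pair y1 -` B) \<partial>lborel))"
  proof (intro mult_left_mono nn_integral_exp_le)
    show "emeasure lborel (Pair y1 -` B) = 0" if "y1 \<notin> {\<delta>..1}" for y1
    proof -
      have "Pair y1 -` B = {}" using B_sub that by auto
      then show ?thesis by simp
    qed
  qed (use \<alpha>\<beta> \<delta> in auto)
  also have "(\<integral>\<^sup>+y1. emeasure lborel (Pair y1 -` B) \<partial>lborel) = emeasure lborel B"
    using lborel.emeasure_pair_measure_alt[OF B'] by (simp add: lborel_prod)
  also have "ennreal (1 / (\<beta> * \<delta>)) * (ennreal (1 / (\<alpha> * \<delta>)) * emeasure lborel B)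
      = ennreal (1 / (\<alpha> * \<beta> * \<delta>\<^sup>2)) * emeasure lborel B"
  proof -
    have "ennreal (1 / (\<beta> * \<delta>)) * ennreal (1 / (\<alpha> * \<delta>)) = ennreal (1 / (\<alpha> * \<beta> * \<delta>\<^sup>2))"
      using \<alpha>\<beta> \<delta> by (simp add: ennreal_mult[symmetric] power2_eq_square mult_ac)
    then show ?thesis by (simp only: mult.assoc[symmetric])
  qed
  finally show ?thesis by (simp add: mult_left_mono)
qed

lemma nn_integral_comp_le_of_deriv_ge:
  fixes f g g' :: "real \<Rightarrow> real" and A :: "real set"
  assumes [measurable]: "f \<in> borel_measurable borel" "g \<in> borel_measurable borel" "g' \<in> borel_measurable borel"
    and f_nonneg: "\<And>\<theta>. 0 \<le> f \<theta>"
    and deriv: "\<And>x. x \<in> {a..b} \<Longrightarrow> (g has_real_derivative g' x) (at x)"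
    and cont: "continuous_on {a..b} g'" and g'_nonneg: "\<And>x. x \<in> {a..b} \<Longrightarrow> 0 \<le> g' x"
    and "a \<le> b" and A: "A \<subseteq> {a..b}" and g'_ge: "\<And>x. x \<in> A \<Longrightarrow> \<delta> \<le> g' x" and "0 < \<delta>"
  shows "(\<integral>\<^sup>+x. ennreal (f (g x) * indicator A x) \<partial>lborel) \<le> ennreal (1 / \<delta>) * (\<integral>\<^sup>+\<theta>. f \<theta> \<partial>lborel)"
proof -
  have "ennreal (f (g x) * indicator A x) \<le> ennreal (1 / \<delta>) * ennreal (f (g x) * g' x * indicator {a..b} x)" for x
  proof (cases "x \<in> A")
    case True
    have "f (g x) * 1 \<le> f (g x) * (1 / \<delta> * g' x)"
      using g'_ge[OF True] f_nonneg \<open>0 < \<delta>\<close> by (intro mult_left_mono) (auto simp: field_simps)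
    then show ?thesis
      using True A f_nonneg g'_nonneg \<open>0 < \<delta>\<close>
      by (subst ennreal_mult[symmetric]) (auto simp: mult_ac intro!: ennreal_leI)
  qed simp
  then have "(\<integral>\<^sup>+x. ennreal (f (g x) * indicator A x) \<partial>lborel)
      \<le> ennreal (1 / \<delta>) * (\<integral>\<^sup>+x. ennreal (f (g x) * g' x * indicator {a..b} x) \<partial>lborel)"
    by (subst nn_integral_cmult[symmetric]) (measurable, rule nn_integral_mono)
  also have "(\<integral>\<^sup>+x. ennreal (f (g x) * g' x * indicator {a..b} x) \<partial>lborel)
      = (\<integral>\<^sup>+\<theta>. ennreal (f \<theta> * indicator {g a..g b} \<theta>) \<partial>lborel)"
    using deriv cont g'_nonneg \<open>a \<le> b\<close>
    by (intro nn_integral_substitution[symmetric]) (auto simp: set_borel_measurable_def)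
  also have "\<dots> \<le> (\<integral>\<^sup>+\<theta>. f \<theta> \<partial>lborel)"
    using f_nonneg by (intro nn_integral_mono ennreal_leI) (auto simp: indicator_def)
  finally show ?thesis by (simp add: mult_left_mono)
qed

lemma (in finite_measure) AE_le_0_if_superlevels_escape:
  fixes f :: "'a \<Rightarrow> real"
  assumes [measurable]: "f \<in> borel_measurable M"
    and escape: "\<And>c n. 0 < c \<Longrightarrow>
      \<exists>c' \<ge> real n. emeasure M {x \<in> space M. c < f x} \<le> emeasure M {x \<in> space M. c' < f x}"
  shows "AE x in M. f x \<le> 0"
proof -
  have null: "emeasure M {x \<in> space M. c < f x} = 0" if "0 < c" for c
  proof -
    define S where "S n = {x \<in> space M. real n < f x}" for n :: nat
    have "(\<lambda>n. emeasure M (S n)) \<longlonglongrightarrow> emeasure M (\<Inter>n. S n)"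
    proof (rule Lim_emeasure_decseq)
      show "decseq S" by (rule decseq_SucI) (auto simp: S_def)
    qed (auto simp: S_def)
    moreover have "(\<Inter>n. S n) = {}"
      by (auto simp: S_def) (metis reals_Archimedean2 less_asym)
    ultimately have "(\<lambda>n. emeasure M (S n)) \<longlonglongrightarrow> 0" by simp
    moreover have "emeasure M {x \<in> space M. c < f x} \<le> emeasure M (S n)" for n
    proof -
      obtain c' where "real n \<le> c'" "emeasure M {x \<in> space M. c < f x} \<le> emeasure M {x \<in> space M. c' < f x}"
        using escape[OF \<open>0 < c\<close>] by blast
      then show ?thesis
        by (elim order_trans) (intro emeasure_mono, auto simp: S_def)
    qed
    ultimately have "emeasure M {x \<in> space M. c < f x} \<le> 0" by (intro LIMSEQ_le_const) auto
    then show ?thesis by simp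
  qed
  have "{x \<in> space M. \<not> f x \<le> 0} \<subseteq> (\<Union>n. {x \<in> space M. 1 / Suc n < f x})"
    by (auto simp: not_le) (metis nat_approx_posE of_nat_Suc)
  moreover have "emeasure M (\<Union>n. {x \<in> space M. 1 / Suc n < f x}) = 0"
    by (rule emeasure_UN_eq_0) (auto intro!: null)
  ultimately show ?thesis by (intro AE_I') auto
qed

lemma AE_density_le_of_emeasure_le:
  fixes \<rho> :: "'a \<Rightarrow> real"
  assumes [measurable]: "\<rho> \<in> borel_measurable M" "K \<in> sets M" and K_finite: "emeasure M K < \<infinity>"
    and le: "\<And>A. A \<in> sets M \<Longrightarrow> A \<subseteq> K \<Longrightarrow> (\<integral>\<^sup>+x\<in>A. ennreal (\<rho> x) \<partial>M) \<le> ennreal c * emeasure M A"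
    and "0 \<le> c"
  shows "AE x in M. x \<in> K \<longrightarrow> \<rho> x \<le> c + 1"
proof (rule AE_I')
  define A where "A = {x \<in> K. c + 1 < \<rho> x}"
  have [measurable]: "A \<in> sets M" unfolding A_def by measurable
  obtain L where L: "emeasure M A = ennreal L" "0 \<le> L"
    using emeasure_mono[of A K M] K_finite by (cases "emeasure M A") (auto simp: A_def)
  have "ennreal ((c + 1) * L) = (\<integral>\<^sup>+x\<in>A. ennreal (c + 1) \<partial>M)"
    using L \<open>0 \<le> c\<close> by (simp add: nn_integral_cmult_indicator ennreal_mult)
  also have "\<dots> \<le> (\<integral>\<^sup>+x\<in>A. ennreal (\<rho> x) \<partial>M)"
    by (intro nn_integral_mono) (auto simp: A_def indicator_def intro: ennreal_leI)
  also have "\<dots> \<le> ennreal (c * L)"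
    using le[of A] L \<open>0 \<le> c\<close> by (auto simp: A_def ennreal_mult)
  finally have "L \<le> 0"
    using L \<open>0 \<le> c\<close> by (simp add: ennreal_le_iff algebra_simps)
  then show "A \<in> null_sets M" using L by (simp add: null_sets_def)
  show "{x \<in> space M. \<not> (x \<in> K \<longrightarrow> \<rho> x \<le> c + 1)} \<subseteq> A" by (auto simp: A_def)
qed

section \<open>The two flows\<close>

definition wedge :: "real \<Rightarrow> (real \<times> real) set" where
  "wedge \<delta> = {y. \<delta> \<le> snd y \<and> snd y + \<delta> \<le> fst y \<and> fst y \<le> 1}"

lemma closed_wedge: "closed (wedge \<delta>)"
proof -
  have "closed {y::real \<times> real. \<delta> \<le> snd y}"
    using closed_Collect_le[OF continuous_on_const continuous_on_snd[OF continuous_on_id]] .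
  moreover have "closed {y::real \<times> real. snd y + \<delta> \<le> fst y}"
    using closed_Collect_le[OF continuous_on_add[OF continuous_on_snd[OF continuous_on_id] continuous_on_const]
        continuous_on_fst[OF continuous_on_id]] .
  moreover have "closed {y::real \<times> real. fst y \<le> 1}"
    using closed_Collect_le[OF continuous_on_fst[OF continuous_on_id] continuous_on_const] .
  ultimately show ?thesis
    unfolding wedge_def Collect_conj_eq by (intro closed_Int)
qed

definition flow0_first_integral :: "real \<Rightarrow> real \<Rightarrow> real \<times> real \<Rightarrow> real" where
  "flow0_first_integral \<alpha> \<beta> y = ln (snd y) / \<beta> - ln (fst y) / \<alpha>"

definition fst_excess :: "real \<times> real \<Rightarrow> real" where
  "fst_excess y = max 0 (fst y - 1)"

lemma fst_excess_pdmp_flow_le: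
  assumes "i \<le> 1" "0 \<le> h" "0 \<le> \<alpha>"
  shows "fst_excess (pdmp_flow \<alpha> \<beta> i h y) \<le> fst_excess y * exp (- \<alpha> * h)"
proof -
  have e: "0 < exp (- \<alpha> * h)" "exp (- \<alpha> * h) \<le> 1" using assms(2,3) by auto
  have "fst (pdmp_flow \<alpha> \<beta> i h y) - 1 = (fst y - 1) * exp (- \<alpha> * h) + (real i - 1) * (1 - exp (- \<alpha> * h))"
    by (simp add: pdmp_flow_def algebra_simps)
  also have "\<dots> \<le> (fst y - 1) * exp (- \<alpha> * h)"
    using assms(1) e by (simp add: mult_nonpos_nonneg)
  also have "\<dots> \<le> fst_excess y * exp (- \<alpha> * h)"
    using e by (intro mult_right_mono) (auto simp: fst_excess_def)
  finally show ?thesis using e by (simp add: fst_excess_def)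
qed

lemma fst_pdmp_flow_le_1:
  assumes "i \<le> 1" "0 \<le> h" "0 \<le> \<alpha>" "fst y \<le> 1"
  shows "fst (pdmp_flow \<alpha> \<beta> i h y) \<le> 1"
proof -
  have "fst_excess y = 0" using assms(4) by (simp add: fst_excess_def)
  then have "fst_excess (pdmp_flow \<alpha> \<beta> i h y) \<le> 0"
    using fst_excess_pdmp_flow_le[OF assms(1-3), of \<beta> y] by simp
  then show ?thesis by (simp add: fst_excess_def)
qed

lemma pdmp_flow_add: "pdmp_flow \<alpha> \<beta> i (s + t) x = pdmp_flow \<alpha> \<beta> i t (pdmp_flow \<alpha> \<beta> i s x)"
  by (simp add: pdmp_flow_def algebra_simps mult_exp_exp)

lemma continuous_on_pdmp_flow: "continuous_on S (\<lambda>t. pdmp_flow \<alpha> \<beta> i t x)"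
  unfolding pdmp_flow_def
  by (intro continuous_on_Pair continuous_on_add continuous_on_const continuous_on_mult_left
      continuous_on_exp continuous_on_id)

lemma pdmp_flow0_log_coords:
  assumes "0 < fst y" "0 < snd y" "\<alpha> \<noteq> 0" "\<beta> \<noteq> 0"
  shows "pdmp_flow \<alpha> \<beta> 0 b y =
    (exp (\<alpha> * (ln (fst y) / \<alpha> - b)), exp (\<beta> * (flow0_first_integral \<alpha> \<beta> y + (ln (fst y) / \<alpha> - b))))"
proof -
  have "\<alpha> * (ln (fst y) / \<alpha> - b) = ln (fst y) + - \<alpha> * b"
    and "\<beta> * (flow0_first_integral \<alpha> \<beta> y + (ln (fst y) / \<alpha> - b)) = ln (snd y) + - \<beta> * b"
    using assms(3,4) by (simp_all add: flow0_first_integral_def field_simps)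
  then show ?thesis using assms(1,2) by (simp add: pdmp_flow_def exp_diff exp_minus field_simps)
qed

lemma mem_wedge_of_flow0:
  assumes "pdmp_flow \<alpha> \<beta> 0 b y \<in> wedge \<delta>" "0 \<le> b" "0 \<le> \<beta>" "\<beta> \<le> \<alpha>" "0 \<le> \<delta>" "fst y \<le> 1"
  shows "y \<in> wedge \<delta>"
proof -
  define z1 z2 where "z1 = fst y * exp (- \<alpha> * b)" and "z2 = snd y * exp (- \<beta> * b)"
  have z: "\<delta> \<le> z2" "z2 + \<delta> \<le> z1"
    using assms(1) by (simp_all add: wedge_def pdmp_flow_def z1_def z2_def)
  have y: "fst y = z1 * exp (\<alpha> * b)" "snd y = z2 * exp (\<beta> * b)"
    by (simp_all add: z1_def z2_def exp_minus field_simps)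
  have e: "1 \<le> exp (\<beta> * b)" "exp (\<beta> * b) \<le> exp (\<alpha> * b)"
    using assms(2-4) by (simp_all add: mult_right_mono)
  have "z2 * 1 \<le> z2 * exp (\<beta> * b)" using z assms(5) e by (intro mult_left_mono) auto
  then have "\<delta> \<le> z2 * exp (\<beta> * b)" using z by linarith
  moreover have "z2 * exp (\<beta> * b) + \<delta> \<le> z1 * exp (\<alpha> * b)"
  proof -
    have "\<delta> * 1 \<le> \<delta> * exp (\<beta> * b)" using e assms(5) by (intro mult_left_mono) auto
    also have "\<dots> \<le> (z1 - z2) * exp (\<beta> * b)" using z by (intro mult_right_mono) auto
    finally have "\<delta> \<le> (z1 - z2) * exp (\<beta> * b)" by simp
    moreover have "z1 * exp (\<beta> * b) \<le> z1 * exp (\<alpha> * b)" using z assms(5) e by (intro mult_left_mono) auto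
    ultimately show ?thesis by (simp add: algebra_simps)
  qed
  ultimately show ?thesis using assms(6) by (simp add: wedge_def y)
qed

lemma below_diagonal_pdmp_flow1:
  assumes "0 < snd y" "snd y < fst y" "fst y \<le> 1" "0 \<le> h" "0 \<le> \<beta>" "\<beta> \<le> \<alpha>"
  shows "0 < snd (pdmp_flow \<alpha> \<beta> 1 h y) \<and> snd (pdmp_flow \<alpha> \<beta> 1 h y) < fst (pdmp_flow \<alpha> \<beta> 1 h y)"
proof -
  have e: "exp (- \<beta> * h) \<le> 1" "exp (- \<alpha> * h) \<le> exp (- \<beta> * h)"
    using assms(4-6) by (simp_all add: mult_right_mono)
  have "(1 - snd y) * exp (- \<beta> * h) < 1"
    using assms(1) e(1) by (smt (verit, best) exp_gt_zero mult_less_cancel_right2)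
  moreover have "(1 - fst y) * exp (- \<alpha> * h) < (1 - snd y) * exp (- \<beta> * h)"
  proof -
    have "(1 - fst y) * exp (- \<alpha> * h) \<le> (1 - fst y) * exp (- \<beta> * h)"
      using assms(3) e(2) by (intro mult_left_mono) auto
    also have "\<dots> < (1 - snd y) * exp (- \<beta> * h)" using assms(2) by simp
    finally show ?thesis .
  qed
  ultimately show ?thesis by (simp add: pdmp_flow_def algebra_simps)
qed

lemma has_real_derivative_flow0_first_integral_along_flow1:
  assumes "0 < fst (pdmp_flow \<alpha> \<beta> 1 a x)" "0 < snd (pdmp_flow \<alpha> \<beta> 1 a x)" "\<alpha> \<noteq> 0" "\<beta> \<noteq> 0"
  shows "((\<lambda>a. flow0_first_integral \<alpha> \<beta> (pdmp_flow \<alpha> \<beta> 1 a x)) has_real_derivative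
      1 / snd (pdmp_flow \<alpha> \<beta> 1 a x) - 1 / fst (pdmp_flow \<alpha> \<beta> 1 a x)) (at a)"
proof -
  define v1 v2 where "v1 a = fst (pdmp_flow \<alpha> \<beta> 1 a x)" and "v2 a = snd (pdmp_flow \<alpha> \<beta> 1 a x)" for a
  have "(v1 has_real_derivative \<alpha> * (1 - v1 a)) (at a)" "(v2 has_real_derivative \<beta> * (1 - v2 a)) (at a)"
    unfolding v1_def v2_def pdmp_flow_def fst_conv snd_conv
    by (auto intro!: derivative_eq_intros simp: algebra_simps)
  then have "((\<lambda>a. ln (v2 a) / \<beta> - ln (v1 a) / \<alpha>) has_real_derivative
      1 / v2 a * (\<beta> * (1 - v2 a)) / \<beta> - 1 / v1 a * (\<alpha> * (1 - v1 a)) / \<alpha>) (at a)"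
    using assms(1,2) unfolding v1_def v2_def
    by (intro DERIV_diff DERIV_cdivide DERIV_ln_divide[THEN DERIV_chain2]) auto
  moreover have "1 / v2 a * (\<beta> * (1 - v2 a)) / \<beta> - 1 / v1 a * (\<alpha> * (1 - v1 a)) / \<alpha> = 1 / v2 a - 1 / v1 a"
    using assms unfolding v1_def v2_def by (simp add: field_simps)
  ultimately show ?thesis by (simp add: flow0_first_integral_def v1_def v2_def)
qed

lemma le_inverse_diff_of_wedge:
  assumes "y \<in> wedge \<delta>" "0 < \<delta>"
  shows "\<delta> \<le> 1 / snd y - 1 / fst y"
proof -
  have y: "\<delta> \<le> snd y" "snd y + \<delta> \<le> fst y" "fst y \<le> 1" using assms(1) by (auto simp: wedge_def)
  have "fst y * snd y \<le> 1 * 1" using y assms(2) by (intro mult_mono) auto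
  then have "(fst y - snd y) * 1 \<le> (fst y - snd y) / (fst y * snd y)"
    using y assms(2) by (subst le_divide_eq) (auto intro: mult_left_mono)
  also have "\<dots> = 1 / snd y - 1 / fst y" using y assms(2) by (simp add: field_simps)
  finally show ?thesis using y by simp
qed

lemma nn_integral_flow0_le:
  assumes "0 < fst y" "0 < snd y" "\<alpha> \<noteq> 0" "\<beta> \<noteq> 0" and [measurable]: "B \<in> sets borel"
  shows "(\<integral>\<^sup>+b. indicator {0..} b * indicator B (pdmp_flow \<alpha> \<beta> 0 b y) \<partial>lborel)
    \<le> (\<integral>\<^sup>+\<sigma>. indicator B (exp (\<alpha> * \<sigma>), exp (\<beta> * (flow0_first_integral \<alpha> \<beta> y + \<sigma>))) \<partial>lborel)"
proof -
  have "(\<integral>\<^sup>+b. indicator {0..} b * indicator B (pdmp_flow \<alpha> \<beta> 0 b y) \<partial>lborel)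
      \<le> (\<integral>\<^sup>+b. indicator B (exp (\<alpha> * (ln (fst y) / \<alpha> + (-1) * b)),
            exp (\<beta> * (flow0_first_integral \<alpha> \<beta> y + (ln (fst y) / \<alpha> + (-1) * b)))) \<partial>lborel)"
    using assms by (intro nn_integral_mono) (simp add: pdmp_flow0_log_coords indicator_def)
  also have "\<dots> = (\<integral>\<^sup>+\<sigma>. indicator B (exp (\<alpha> * \<sigma>), exp (\<beta> * (flow0_first_integral \<alpha> \<beta> y + \<sigma>))) \<partial>lborel)"
    by (subst nn_integral_real_affine[where c = "-1" and t = "ln (fst y) / \<alpha>"]) auto
  finally show ?thesis .
qed

definition flow1_wedge_times :: "real \<Rightarrow> real \<Rightarrow> real \<Rightarrow> real \<times> real \<Rightarrow> real set" where
  "flow1_wedge_times \<alpha> \<beta> \<delta> x = {a. 0 \<le> a \<and> pdmp_flow \<alpha> \<beta> 1 a x \<in> wedge \<delta>}"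

lemma mem_flow1_wedge_times_of_flow0:
  assumes "pdmp_flow \<alpha> \<beta> 0 b (pdmp_flow \<alpha> \<beta> 1 a x) \<in> wedge \<delta>"
    and "0 \<le> a" "0 \<le> b" "0 \<le> \<beta>" "\<beta> \<le> \<alpha>" "0 \<le> \<delta>" "fst x \<le> 1"
  shows "a \<in> flow1_wedge_times \<alpha> \<beta> \<delta> x"
proof -
  have "fst (pdmp_flow \<alpha> \<beta> 1 a x) \<le> 1" using assms by (intro fst_pdmp_flow_le_1) auto
  then show ?thesis
    using mem_wedge_of_flow0[OF assms(1)] assms by (simp add: flow1_wedge_times_def)
qed

lemma compact_flow1_wedge_times:
  assumes "0 < \<beta>" "0 < \<delta>"
  shows "compact (flow1_wedge_times \<alpha> \<beta> \<delta> x)"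
proof -
  let ?v = "\<lambda>a. pdmp_flow \<alpha> \<beta> 1 a x"
  have "\<forall>S. closed S \<longrightarrow> closed (?v -` S \<inter> UNIV)"
    using continuous_on_pdmp_flow[of UNIV \<alpha> \<beta> 1 x] by (simp only: continuous_on_closed_vimage[OF closed_UNIV])
  then have "closed ({0..} \<inter> ?v -` wedge \<delta>)"
    using closed_wedge by (simp add: closed_Int)
  moreover have "flow1_wedge_times \<alpha> \<beta> \<delta> x = {0..} \<inter> ?v -` wedge \<delta>"
    by (auto simp: flow1_wedge_times_def)
  moreover have "flow1_wedge_times \<alpha> \<beta> \<delta> x \<subseteq> {0 .. (1 - snd x) / (\<beta> * \<delta>)}"
  proof
    fix a assume a: "a \<in> flow1_wedge_times \<alpha> \<beta> \<delta> x"
    then have "snd (?v a) + \<delta> \<le> 1" by (auto simp: flow1_wedge_times_def wedge_def)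
    then have "\<delta> * exp (\<beta> * a) \<le> 1 - snd x"
      by (simp add: pdmp_flow_def algebra_simps exp_minus field_simps)
    moreover have "\<delta> * (\<beta> * a) \<le> \<delta> * exp (\<beta> * a)"
      using assms exp_ge_add_one_self[of "\<beta> * a"] by (intro mult_left_mono) linarith+
    ultimately have "a * (\<beta> * \<delta>) \<le> 1 - snd x" by (simp add: mult_ac)
    then show "a \<in> {0 .. (1 - snd x) / (\<beta> * \<delta>)}"
      using a assms by (simp add: flow1_wedge_times_def pos_le_divide_eq)
  qed
  ultimately show ?thesis
    by (metis bounded_closed_interval bounded_subset compact_eq_bounded_closed)
qed

text \<open>Along mode 1, the first integral of mode 0 grows at rate \<open>1/y\<^sub>2 - 1/y\<^sub>1 \<ge> \<delta>\<close> inside the wedge.\<close>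
lemma nn_integral_flow0_first_integral_along_flow1_le:
  fixes f :: "real \<Rightarrow> real"
  assumes \<alpha>\<beta>: "0 < \<beta>" "\<beta> \<le> \<alpha>" and "0 < \<delta>"
    and [measurable]: "f \<in> borel_measurable borel" and f_nonneg: "\<And>t. 0 \<le> f t"
  shows "(\<integral>\<^sup>+a. ennreal (f (flow0_first_integral \<alpha> \<beta> (pdmp_flow \<alpha> \<beta> 1 a x)) *
      indicator (flow1_wedge_times \<alpha> \<beta> \<delta> x) a) \<partial>lborel) \<le> ennreal (1 / \<delta>) * (\<integral>\<^sup>+t. f t \<partial>lborel)"
proof (cases "flow1_wedge_times \<alpha> \<beta> \<delta> x = {}")
  case False
  define v where "v a = pdmp_flow \<alpha> \<beta> 1 a x" for a
  define R where "R = flow1_wedge_times \<alpha> \<beta> \<delta> x"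
  have "compact R" unfolding R_def by (rule compact_flow1_wedge_times[OF \<alpha>\<beta>(1) \<open>0 < \<delta>\<close>])
  then obtain p q where pq: "p \<in> R" "q \<in> R" and R_sub: "R \<subseteq> {p..q}"
    using False compact_attains_inf[of R] compact_attains_sup[of R] unfolding R_def
    by (metis atLeastAtMost_iff subsetI)
  have meas: "(\<lambda>a. flow0_first_integral \<alpha> \<beta> (pdmp_flow \<alpha> \<beta> 1 a x)) \<in> borel_measurable borel"
    "(\<lambda>a. 1 / snd (v a) - 1 / fst (v a)) \<in> borel_measurable borel"
    unfolding v_def flow0_first_integral_def pdmp_flow_def by measurable
  have below: "0 < snd (v a) \<and> snd (v a) < fst (v a)" if "a \<in> {p..q}" for a
  proof -
    have "v a = pdmp_flow \<alpha> \<beta> 1 (a - p) (v p)" by (simp add: v_def pdmp_flow_add[symmetric])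
    moreover have "0 < snd (v p)" "snd (v p) < fst (v p)" "fst (v p) \<le> 1"
      using pq(1) \<open>0 < \<delta>\<close> by (auto simp: R_def v_def flow1_wedge_times_def wedge_def)
    ultimately show ?thesis using that \<alpha>\<beta> below_diagonal_pdmp_flow1[of "v p" "a - p" \<beta> \<alpha>] by simp
  qed
  show ?thesis
  proof (rule nn_integral_comp_le_of_deriv_ge[where a = p and b = q and g' = "\<lambda>a. 1 / snd (v a) - 1 / fst (v a)"])
    show "((\<lambda>a. flow0_first_integral \<alpha> \<beta> (pdmp_flow \<alpha> \<beta> 1 a x)) has_real_derivative
        1 / snd (v a) - 1 / fst (v a)) (at a)" if "a \<in> {p..q}" for a
      using below[OF that] \<alpha>\<beta> unfolding v_def
      by (intro has_real_derivative_flow0_first_integral_along_flow1) auto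
    have "continuous_on {p..q} v" unfolding v_def by (rule continuous_on_pdmp_flow)
    moreover have "snd (v a) \<noteq> 0" "fst (v a) \<noteq> 0" if "a \<in> {p..q}" for a
      using below[OF that] by auto
    ultimately show "continuous_on {p..q} (\<lambda>a. 1 / snd (v a) - 1 / fst (v a))"
      by (intro continuous_on_diff continuous_on_divide continuous_on_const continuous_on_fst continuous_on_snd) auto
    show "0 \<le> 1 / snd (v a) - 1 / fst (v a)" if "a \<in> {p..q}" for a
      using below[OF that] by (simp add: field_simps)
    show "\<delta> \<le> 1 / snd (v a) - 1 / fst (v a)" if "a \<in> flow1_wedge_times \<alpha> \<beta> \<delta> x" for a
      using that \<open>0 < \<delta>\<close> by (simp add: v_def flow1_wedge_times_def le_inverse_diff_of_wedge)
  qed (use pq R_sub f_nonneg meas \<open>0 < \<delta>\<close> in \<open>auto simp: R_def\<close>)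
qed (simp add: flow1_wedge_times_def)

text \<open>In the coordinates \<open>y = (exp (\<alpha> \<sigma>), exp (\<beta> (\<theta> + \<sigma>)))\<close> the switching time \<open>a\<close> only enters
  through \<open>\<theta>\<close>, the first integral of mode 0 at the switching point.\<close>
lemma nn_integral_switch_flow_le:
  fixes \<alpha> \<beta> \<delta> :: real and B :: "(real \<times> real) set" and x :: "real \<times> real"
  assumes \<alpha>\<beta>: "0 < \<beta>" "\<beta> < \<alpha>" and \<delta>: "0 < \<delta>" "\<delta> \<le> 1"
    and B[measurable]: "B \<in> sets borel" and B_sub: "B \<subseteq> wedge \<delta>" and x: "fst x \<le> 1"
  shows "(\<integral>\<^sup>+a. indicator {0..} a * (\<integral>\<^sup>+b. indicator {0..} b *
            indicator B (pdmp_flow \<alpha> \<beta> 0 b (pdmp_flow \<alpha> \<beta> 1 a x)) \<partial>lborel) \<partial>lborel)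
    \<le> ennreal (1 / (\<alpha> * \<beta> * \<delta> ^ 3)) * emeasure lborel B"
proof -
  define v where "v a = pdmp_flow \<alpha> \<beta> 1 a x" for a
  define E where "E t \<sigma> = (indicator B (exp (\<alpha> * \<sigma>), exp (\<beta> * (t + \<sigma>))) :: real)" for t \<sigma>
  define R where "R = flow1_wedge_times \<alpha> \<beta> \<delta> x"
  have [measurable]: "R \<in> sets borel"
    unfolding R_def using \<alpha>\<beta> \<delta> by (intro borel_compact compact_flow1_wedge_times) auto
  have hit_R: "a \<in> R" if "0 \<le> a" "0 \<le> b" "pdmp_flow \<alpha> \<beta> 0 b (v a) \<in> B" for a b
    using that B_sub \<alpha>\<beta> \<delta> x unfolding R_def v_def by (intro mem_flow1_wedge_times_of_flow0[where b = b]) auto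
  have inner: "indicator {0..} a * (\<integral>\<^sup>+b. indicator {0..} b * indicator B (pdmp_flow \<alpha> \<beta> 0 b (v a)) \<partial>lborel)
      \<le> (\<integral>\<^sup>+\<sigma>. ennreal (E (flow0_first_integral \<alpha> \<beta> (v a)) \<sigma> * indicator R a) \<partial>lborel)" for a
  proof (cases "a \<in> R")
    case True
    then have "0 < fst (v a)" "0 < snd (v a)" "0 \<le> a"
      using \<delta> by (auto simp: R_def v_def flow1_wedge_times_def wedge_def)
    then show ?thesis
      using nn_integral_flow0_le[of "v a" \<alpha> \<beta> B] True \<alpha>\<beta> by (simp add: E_def ennreal_indicator)
  next
    case False
    have "(\<integral>\<^sup>+b. indicator {0..} b * indicator B (pdmp_flow \<alpha> \<beta> 0 b (v a)) \<partial>lborel)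
        = (\<integral>\<^sup>+b. 0 \<partial>(lborel :: real measure))" if "0 \<le> a"
      using hit_R[of a] False that by (intro nn_integral_cong) (auto simp: indicator_def)
    then show ?thesis by (cases "0 \<le> a") simp_all
  qed
  have [measurable]: "(\<lambda>a. flow0_first_integral \<alpha> \<beta> (v a)) \<in> borel_measurable borel"
    unfolding v_def flow0_first_integral_def pdmp_flow_def by measurable
  have "(\<integral>\<^sup>+a. indicator {0..} a * (\<integral>\<^sup>+b. indicator {0..} b *
            indicator B (pdmp_flow \<alpha> \<beta> 0 b (v a)) \<partial>lborel) \<partial>lborel)
      \<le> (\<integral>\<^sup>+a. (\<integral>\<^sup>+\<sigma>. ennreal (E (flow0_first_integral \<alpha> \<beta> (v a)) \<sigma> * indicator R a) \<partial>lborel) \<partial>lborel)"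
    by (intro nn_integral_mono inner)
  also have "\<dots> = (\<integral>\<^sup>+\<sigma>. (\<integral>\<^sup>+a. ennreal (E (flow0_first_integral \<alpha> \<beta> (v a)) \<sigma> * indicator R a) \<partial>lborel) \<partial>lborel)"
    by (rule lborel_pair.Fubini') (unfold E_def, measurable)
  also have "\<dots> \<le> (\<integral>\<^sup>+\<sigma>. ennreal (1 / \<delta>) * (\<integral>\<^sup>+t. E t \<sigma> \<partial>lborel) \<partial>lborel)"
    unfolding R_def v_def using \<alpha>\<beta> \<delta>
    by (intro nn_integral_mono nn_integral_flow0_first_integral_along_flow1_le) (auto simp: E_def)
  also have "\<dots> = ennreal (1 / \<delta>) * (\<integral>\<^sup>+\<sigma>. (\<integral>\<^sup>+t. E t \<sigma> \<partial>lborel) \<partial>lborel)"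
    by (rule nn_integral_cmult) (unfold E_def, measurable)
  also have "\<dots> \<le> ennreal (1 / \<delta>) * (ennreal (1 / (\<alpha> * \<beta> * \<delta>\<^sup>2)) * emeasure lborel B)"
    using B_sub \<alpha>\<beta> \<delta> unfolding E_def ennreal_indicator
    by (intro mult_left_mono nn_integral_indicator_exp_coords_le) (auto simp: wedge_def)
  also have "\<dots> = ennreal (1 / \<delta> * (1 / (\<alpha> * \<beta> * \<delta>\<^sup>2))) * emeasure lborel B"
    by (subst ennreal_mult) (use \<alpha>\<beta> \<delta> in \<open>auto simp: mult.assoc\<close>)
  also have "1 / \<delta> * (1 / (\<alpha> * \<beta> * \<delta>\<^sup>2)) = 1 / (\<alpha> * \<beta> * \<delta> ^ 3)"
    by (simp add: power2_eq_square power3_eq_cube mult_ac)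
  finally show ?thesis by (simp add: v_def)
qed

section \<open>The exponential samples driving the jumps\<close>

definition exp1_measure :: "real measure" where
  "exp1_measure = density lborel (\<lambda>x. ennreal (exponential_density 1 x))"

lemma exp_samples_eq: "exp_samples = stream_space exp1_measure"
  by (simp add: exp_samples_def exp1_measure_def)

interpretation exp1: prob_space exp1_measure
  unfolding exp1_measure_def by (rule prob_space_exponential_density) simp

interpretation samples: prob_space exp_samples
  unfolding exp_samples_eq by (rule exp1.prob_space_stream_space)

lemma sets_exp1_measure [simp, measurable_cong]: "sets exp1_measure = sets borel"
  by (simp add: exp1_measure_def)

lemma space_exp1_measure [simp]: "space exp1_measure = UNIV"
  by (simp add: exp1_measure_def)

lemma AE_exp1_measure_nonneg: "AE w in exp1_measure. 0 \<le> w"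
  unfolding exp1_measure_def by (subst AE_density) (auto simp: exponential_density_def)

lemma AE_exp_samples_nonneg: "AE \<omega> in exp_samples. \<forall>n. 0 \<le> \<omega> !! n"
proof -
  have "AE \<omega> in stream_space exp1_measure. stream_all (\<lambda>w. 0 \<le> w) \<omega>"
    by (rule exp1.AE_stream_all) (auto simp: AE_exp1_measure_nonneg)
  then show ?thesis unfolding exp_samples_eq stream_all_def
    by (rule eventually_mono) (use snth_sset in blast)
qed

lemma nn_integral_exp_samples_Stream:
  assumes [measurable]: "f \<in> borel_measurable exp_samples"
  shows "(\<integral>\<^sup>+\<omega>. f \<omega> \<partial>exp_samples) = (\<integral>\<^sup>+w. (\<integral>\<^sup>+\<omega>. f (w ## \<omega>) \<partial>exp_samples) \<partial>exp1_measure)"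
  unfolding exp_samples_eq by (rule exp1.nn_integral_stream_space) (simp add: exp_samples_eq[symmetric])

lemma nn_integral_exp1_measure:
  assumes "f \<in> borel_measurable borel"
  shows "(\<integral>\<^sup>+w. f w \<partial>exp1_measure) = (\<integral>\<^sup>+w. ennreal (exponential_density 1 w) * f w \<partial>lborel)"
  unfolding exp1_measure_def using assms by (subst nn_integral_density) auto

lemma nn_integral_exp1_measure_div_le:
  assumes "0 < r" and [measurable]: "H \<in> borel_measurable borel"
  shows "(\<integral>\<^sup>+w. H (w / r) \<partial>exp1_measure) \<le> ennreal r * (\<integral>\<^sup>+a. indicator {0..} a * H a \<partial>lborel)"
proof -
  have "(\<integral>\<^sup>+w. H (w / r) \<partial>exp1_measure) \<le> (\<integral>\<^sup>+w. indicator {0..} w * H (w / r) \<partial>lborel)"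
    by (subst nn_integral_exp1_measure, measurable)
       (intro nn_integral_mono mult_right_mono, auto simp: exponential_density_def indicator_def)
  also have "\<dots> = ennreal r * (\<integral>\<^sup>+a. indicator {0..} a * H a \<partial>lborel)"
    using nn_integral_real_affine[of "\<lambda>w. indicator {0..} w * H (w / r)" r 0] assms(1)
    by (simp add: indicator_def zero_le_mult_iff)
  finally show ?thesis .
qed

lemma nn_integral_exp1_measure_exp_neg_div:
  assumes "0 < r"
  shows "(\<integral>\<^sup>+w. ennreal (exp (- w / r)) \<partial>exp1_measure) = ennreal (r / (r + 1))"
proof -
  have "ennreal (exponential_density 1 w) * ennreal (exp (- w / r))
      = ennreal (r / (r + 1)) * ennreal (exponential_density (1 + 1 / r) w)" for w
  proof (cases "w < 0")
    case False
    have "0 < r + r * r" using assms by (simp add: add_pos_pos)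
    then have "r / (r + 1) * (1 + 1 / r) = 1" using assms by (simp add: field_simps)
    moreover have "exp (- w) * exp (- w / r) = exp (- w * (1 + 1 / r))"
      by (simp add: mult_exp_exp algebra_simps)
    ultimately have "exp (- w) * exp (- w / r) = r / (r + 1) * ((1 + 1 / r) * exp (- w * (1 + 1 / r)))"
      by (metis mult.assoc mult_1)
    then show ?thesis using False assms
      by (simp add: exponential_density_def ennreal_mult[symmetric])
  qed (simp add: exponential_density_def)
  then have "(\<integral>\<^sup>+w. ennreal (exp (- w / r)) \<partial>exp1_measure)
      = ennreal (r / (r + 1)) * (\<integral>\<^sup>+w. ennreal (exponential_density (1 + 1 / r) w) \<partial>lborel)"
    by (simp add: nn_integral_exp1_measure nn_integral_cmult[symmetric])
  also have "(\<integral>\<^sup>+w. ennreal (exponential_density (1 + 1 / r) w) \<partial>lborel) = 1"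
  proof -
    interpret prob_space "density lborel (exponential_density (1 + 1 / r))"
      by (rule prob_space_exponential_density) (use assms in \<open>simp add: add_pos_pos\<close>)
    show ?thesis using emeasure_space_1 by (simp add: emeasure_density)
  qed
  finally show ?thesis by simp
qed

lemma pdmp_mode_Suc: "pdmp_mode i (Suc k) = pdmp_mode (Suc i) k"
  by (simp add: pdmp_mode_def)

lemma pdmp_mode_le_1: "pdmp_mode i k \<le> 1"
  by (simp add: pdmp_mode_def)

lemma pdmp_rate_pos: "0 < l0 \<Longrightarrow> 0 < l1 \<Longrightarrow> 0 < pdmp_rate l0 l1 j"
  by (simp add: pdmp_rate_def)

lemma pdmp_hold_Stream_0: "pdmp_hold l0 l1 i (w ## \<omega>) 0 = w / pdmp_rate l0 l1 (i mod 2)"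
  by (simp add: pdmp_hold_def pdmp_mode_def)

lemma pdmp_hold_Stream_Suc: "pdmp_hold l0 l1 i (w ## \<omega>) (Suc k) = pdmp_hold l0 l1 (Suc i) \<omega> k"
  by (simp add: pdmp_hold_def pdmp_mode_Suc)

lemma pdmp_hold_nonneg: "0 < l0 \<Longrightarrow> 0 < l1 \<Longrightarrow> 0 \<le> \<omega> !! k \<Longrightarrow> 0 \<le> pdmp_hold l0 l1 i \<omega> k"
  by (simp add: pdmp_hold_def pdmp_rate_def)

lemma pdmp_jump_time_nonneg: "0 < l0 \<Longrightarrow> 0 < l1 \<Longrightarrow> \<forall>n. 0 \<le> \<omega> !! n \<Longrightarrow> 0 \<le> pdmp_jump_time l0 l1 i \<omega> k"
  unfolding pdmp_jump_time_def by (intro sum_nonneg pdmp_hold_nonneg) auto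

lemma pdmp_jump_time_0 [simp]: "pdmp_jump_time l0 l1 i \<omega> 0 = 0"
  by (simp add: pdmp_jump_time_def)

lemma pdmp_jump_time_Suc:
  "pdmp_jump_time l0 l1 i \<omega> (Suc k) = pdmp_jump_time l0 l1 i \<omega> k + pdmp_hold l0 l1 i \<omega> k"
  by (simp add: pdmp_jump_time_def)

lemma pdmp_jump_time_Stream_Suc:
  "pdmp_jump_time l0 l1 i (w ## \<omega>) (Suc k) = w / pdmp_rate l0 l1 (i mod 2) + pdmp_jump_time l0 l1 (Suc i) \<omega> k"
  unfolding pdmp_jump_time_def by (simp only: sum.lessThan_Suc_shift pdmp_hold_Stream_Suc pdmp_hold_Stream_0)

lemma pdmp_pos_Stream_Suc:
  "pdmp_pos \<alpha> \<beta> l0 l1 x i (w ## \<omega>) (Suc k) =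
    pdmp_pos \<alpha> \<beta> l0 l1 (pdmp_flow \<alpha> \<beta> (i mod 2) (w / pdmp_rate l0 l1 (i mod 2)) x) (Suc i) \<omega> k"
  by (induction k) (simp_all only: pdmp_pos.simps pdmp_mode_Suc pdmp_hold_Stream_Suc,
      simp add: pdmp_hold_Stream_0 pdmp_mode_def)

text \<open>The measurability prover does not see the Borel sets of \<open>real \<times> real\<close> as a product \<open>\<sigma>\<close>-algebra.\<close>
lemma borel_measurable_fst_pair [measurable (raw)]:
  "y \<in> borel_measurable N \<Longrightarrow> (\<lambda>u. fst (y u :: real \<times> real)) \<in> borel_measurable N"
  using measurable_comp[of y N borel fst borel] by (simp add: comp_def borel_measurable_continuous_onI continuous_on_fst)

lemma borel_measurable_snd_pair [measurable (raw)]: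
  "y \<in> borel_measurable N \<Longrightarrow> (\<lambda>u. snd (y u :: real \<times> real)) \<in> borel_measurable N"
  using measurable_comp[of y N borel snd borel] by (simp add: comp_def borel_measurable_continuous_onI continuous_on_snd)

lemma measurable_pdmp_flow [measurable (raw)]:
  assumes [measurable]: "h \<in> borel_measurable N" "y \<in> borel_measurable N"
  shows "(\<lambda>u. pdmp_flow \<alpha> \<beta> j (h u) (y u)) \<in> borel_measurable N"
  unfolding pdmp_flow_def by (intro borel_measurable_Pair) measurable

lemma measurable_snth_exp_samples: "(\<lambda>\<omega>. \<omega> !! k) \<in> borel_measurable exp_samples"
proof -
  have "(\<lambda>\<omega>. \<omega> !! k) \<in> measurable (stream_space exp1_measure) exp1_measure" by (rule measurable_snth)
  then show ?thesis unfolding exp_samples_eq by (simp add: measurable_cong_sets[OF refl sets_exp1_measure])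
qed

lemma measurable_pdmp_hold [measurable (raw)]:
  assumes "\<omega> \<in> measurable N exp_samples"
  shows "(\<lambda>u. pdmp_hold l0 l1 i (\<omega> u) k) \<in> borel_measurable N"
  using measurable_comp[OF assms measurable_snth_exp_samples]
  unfolding pdmp_hold_def by (intro borel_measurable_divide) (auto simp: comp_def)

lemma measurable_pdmp_jump_time [measurable (raw)]:
  assumes "\<omega> \<in> measurable N exp_samples"
  shows "(\<lambda>u. pdmp_jump_time l0 l1 i (\<omega> u) k) \<in> borel_measurable N"
  unfolding pdmp_jump_time_def by (intro borel_measurable_sum measurable_pdmp_hold[OF assms])

lemma measurable_pdmp_pos [measurable (raw)]:
  assumes "\<omega> \<in> measurable N exp_samples" "x \<in> borel_measurable N"
  shows "(\<lambda>u. pdmp_pos \<alpha> \<beta> l0 l1 (x u) i (\<omega> u) k) \<in> borel_measurable N"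
  by (induction k) (use assms(2) in simp,
      simp only: pdmp_pos.simps, rule measurable_pdmp_flow[OF measurable_pdmp_hold[OF assms(1)]])

lemma measurable_Stream_exp_samples [measurable (raw)]:
  assumes "f \<in> borel_measurable N" "g \<in> measurable N exp_samples"
  shows "(\<lambda>x. f x ## g x) \<in> measurable N exp_samples"
  using assms unfolding exp_samples_eq
  by (intro measurable_Stream) (auto simp: measurable_cong_sets[OF refl sets_exp1_measure])

definition laplace_factor :: "real \<Rightarrow> real \<Rightarrow> real" where
  "laplace_factor l0 l1 = max (l0 / (l0 + 1)) (l1 / (l1 + 1))"

lemma laplace_factor_bounds: "0 < l0 \<Longrightarrow> 0 < l1 \<Longrightarrow> 0 < laplace_factor l0 l1 \<and> laplace_factor l0 l1 < 1"
  by (auto simp: laplace_factor_def max_def)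

lemma nn_integral_exp_neg_pdmp_jump_time_le:
  assumes l: "0 < l0" "0 < l1"
  shows "(\<integral>\<^sup>+\<omega>. ennreal (exp (- pdmp_jump_time l0 l1 i \<omega> n)) \<partial>exp_samples) \<le> ennreal (laplace_factor l0 l1 ^ n)"
proof (induction n arbitrary: i)
  case 0
  then show ?case by (simp add: samples.emeasure_space_1)
next
  case (Suc n)
  define r where "r = pdmp_rate l0 l1 (i mod 2)"
  have r: "0 < r" "r / (r + 1) \<le> laplace_factor l0 l1"
    using l by (auto simp: r_def pdmp_rate_def laplace_factor_def)
  have step: "ennreal (exp (- pdmp_jump_time l0 l1 i (w ## \<omega>) (Suc n)))
      = ennreal (exp (- w / r)) * ennreal (exp (- pdmp_jump_time l0 l1 (Suc i) \<omega> n))" for w \<omega>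
    by (simp add: pdmp_jump_time_Stream_Suc r_def[symmetric] ennreal_mult[symmetric] mult_exp_exp)
  have "(\<integral>\<^sup>+\<omega>. ennreal (exp (- pdmp_jump_time l0 l1 i \<omega> (Suc n))) \<partial>exp_samples)
      = (\<integral>\<^sup>+w. ennreal (exp (- w / r)) *
          (\<integral>\<^sup>+\<omega>. ennreal (exp (- pdmp_jump_time l0 l1 (Suc i) \<omega> n)) \<partial>exp_samples) \<partial>exp1_measure)"
    by (subst nn_integral_exp_samples_Stream, measurable)
       (simp only: step, intro nn_integral_cong nn_integral_cmult, measurable)
  also have "\<dots> \<le> (\<integral>\<^sup>+w. ennreal (exp (- w / r)) * ennreal (laplace_factor l0 l1 ^ n) \<partial>exp1_measure)"
    by (intro nn_integral_mono mult_left_mono Suc.IH) auto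
  also have "\<dots> = ennreal (r / (r + 1)) * ennreal (laplace_factor l0 l1 ^ n)"
    using nn_integral_exp1_measure_exp_neg_div[OF r(1)] by (subst nn_integral_multc) auto
  also have "\<dots> \<le> ennreal (laplace_factor l0 l1) * ennreal (laplace_factor l0 l1 ^ n)"
    using r by (intro mult_right_mono ennreal_leI) auto
  also have "\<dots> = ennreal (laplace_factor l0 l1 ^ Suc n)"
    using laplace_factor_bounds[OF l] by (simp add: ennreal_mult[symmetric])
  finally show ?case .
qed

section \<open>Support of the invariant measure\<close>

lemma pdmp_state_eq:
  "pdmp_state \<alpha> \<beta> l0 l1 t (x, i) \<omega> =
    (let k = (LEAST k. t < pdmp_jump_time l0 l1 i \<omega> (Suc k))
     in (pdmp_flow \<alpha> \<beta> (pdmp_mode i k) (t - pdmp_jump_time l0 l1 i \<omega> k) (pdmp_pos \<alpha> \<beta> l0 l1 x i \<omega> k),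
         pdmp_mode i k))"
  by (simp add: pdmp_state_def Let_def)

lemma pdmp_jump_time_Least_le:
  assumes "0 \<le> t"
  shows "pdmp_jump_time l0 l1 i \<omega> (LEAST k. t < pdmp_jump_time l0 l1 i \<omega> (Suc k)) \<le> t"
proof (cases "LEAST k. t < pdmp_jump_time l0 l1 i \<omega> (Suc k)")
  case (Suc m)
  then have "\<not> t < pdmp_jump_time l0 l1 i \<omega> (Suc m)"
    by (metis lessI not_less_Least)
  then show ?thesis using Suc by simp
qed (use assms in simp)

lemma fst_excess_pdmp_pos_le:
  assumes "0 < l0" "0 < l1" "0 \<le> \<alpha>" "\<forall>n. 0 \<le> \<omega> !! n"
  shows "fst_excess (pdmp_pos \<alpha> \<beta> l0 l1 x i \<omega> k) \<le> fst_excess x * exp (- \<alpha> * pdmp_jump_time l0 l1 i \<omega> k)"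
proof (induction k)
  case (Suc k)
  have "fst_excess (pdmp_pos \<alpha> \<beta> l0 l1 x i \<omega> (Suc k))
      \<le> fst_excess (pdmp_pos \<alpha> \<beta> l0 l1 x i \<omega> k) * exp (- \<alpha> * pdmp_hold l0 l1 i \<omega> k)"
    using assms by (simp only: pdmp_pos.simps) (intro fst_excess_pdmp_flow_le pdmp_mode_le_1 pdmp_hold_nonneg, auto)
  also have "\<dots> \<le> fst_excess x * exp (- \<alpha> * pdmp_jump_time l0 l1 i \<omega> k) * exp (- \<alpha> * pdmp_hold l0 l1 i \<omega> k)"
    by (intro mult_right_mono Suc.IH) auto
  finally show ?case by (simp add: pdmp_jump_time_Suc mult_exp_exp algebra_simps)
qed simp

lemma fst_excess_pdmp_state_le:
  assumes "0 < l0" "0 < l1" "0 \<le> \<alpha>" "\<forall>n. 0 \<le> \<omega> !! n" "0 \<le> t"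
  shows "fst_excess (fst (pdmp_state \<alpha> \<beta> l0 l1 t (x, i) \<omega>)) \<le> fst_excess x * exp (- \<alpha> * t)"
proof -
  define k where "k = (LEAST k. t < pdmp_jump_time l0 l1 i \<omega> (Suc k))"
  define T where "T = pdmp_jump_time l0 l1 i \<omega> k"
  have T: "T \<le> t" unfolding T_def k_def by (rule pdmp_jump_time_Least_le[OF assms(5)])
  have "fst_excess (fst (pdmp_state \<alpha> \<beta> l0 l1 t (x, i) \<omega>))
      = fst_excess (pdmp_flow \<alpha> \<beta> (pdmp_mode i k) (t - T) (pdmp_pos \<alpha> \<beta> l0 l1 x i \<omega> k))"
    by (simp add: pdmp_state_eq Let_def k_def T_def)
  also have "\<dots> \<le> fst_excess (pdmp_pos \<alpha> \<beta> l0 l1 x i \<omega> k) * exp (- \<alpha> * (t - T))"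
    using T assms by (intro fst_excess_pdmp_flow_le pdmp_mode_le_1) auto
  also have "\<dots> \<le> fst_excess x * exp (- \<alpha> * T) * exp (- \<alpha> * (t - T))"
    unfolding T_def using assms by (intro mult_right_mono fst_excess_pdmp_pos_le) auto
  also have "\<dots> = fst_excess x * exp (- \<alpha> * t)"
    by (simp add: mult_exp_exp algebra_simps)
  finally show ?thesis .
qed

lemma invariant_emeasure_fst_excess_le:
  assumes inv: "pdmp_invariant \<alpha> \<beta> l0 l1 \<mu>" and "0 \<le> \<alpha>" "0 < l0" "0 < l1" "0 \<le> t"
  shows "emeasure \<mu> {z \<in> space \<mu>. c < fst_excess (fst z)}
    \<le> emeasure \<mu> {z \<in> space \<mu>. c * exp (\<alpha> * t) < fst_excess (fst z)}"
proof -
  have sets_\<mu>: "sets \<mu> = sets (borel \<Otimes>\<^sub>M count_space {0, 1})"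
    using inv by (simp add: pdmp_invariant_def)
  have [measurable]: "(\<lambda>z. fst_excess (fst z)) \<in> borel_measurable \<mu>"
    unfolding measurable_cong_sets[OF sets_\<mu> refl] fst_excess_def by measurable
  define A where "A c = {z \<in> space \<mu>. c < fst_excess (fst z)}" for c
  have A_sets: "A c \<in> sets \<mu>" for c unfolding A_def by measurable
  have "emeasure \<mu> (A c) = (\<integral>\<^sup>+ z. pdmp_kernel \<alpha> \<beta> l0 l1 t z (A c) \<partial>\<mu>)"
    using inv A_sets \<open>0 \<le> t\<close> by (simp add: pdmp_invariant_def)
  also have "\<dots> \<le> (\<integral>\<^sup>+ z. indicator (A (c * exp (\<alpha> * t))) z \<partial>\<mu>)"
  proof (rule nn_integral_mono)
    fix z assume z: "z \<in> space \<mu>"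
    obtain x i where z_eq: "z = (x, i)" by (cases z)
    show "pdmp_kernel \<alpha> \<beta> l0 l1 t z (A c) \<le> indicator (A (c * exp (\<alpha> * t))) z"
    proof (cases "z \<in> A (c * exp (\<alpha> * t))")
      case False
      then have "fst_excess x * exp (- \<alpha> * t) \<le> c"
        using z by (simp add: A_def z_eq exp_minus field_simps)
      have "AE \<omega> in exp_samples. fst_excess (fst (pdmp_state \<alpha> \<beta> l0 l1 t (x, i) \<omega>)) \<le> c"
        using AE_exp_samples_nonneg
      proof (rule eventually_mono)
        fix \<omega> :: "real stream" assume "\<forall>n. 0 \<le> \<omega> !! n"
        then have "fst_excess (fst (pdmp_state \<alpha> \<beta> l0 l1 t (x, i) \<omega>)) \<le> fst_excess x * exp (- \<alpha> * t)"
          using assms(2-5) by (intro fst_excess_pdmp_state_le) auto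
        then show "fst_excess (fst (pdmp_state \<alpha> \<beta> l0 l1 t (x, i) \<omega>)) \<le> c"
          using \<open>fst_excess x * exp (- \<alpha> * t) \<le> c\<close> by linarith
      qed
      then have "AE \<omega> in exp_samples. \<omega> \<notin> {\<omega> \<in> space exp_samples. pdmp_state \<alpha> \<beta> l0 l1 t z \<omega> \<in> A c}"
        by (rule eventually_mono) (auto simp: A_def z_eq)
      then show ?thesis by (simp add: pdmp_kernel_def emeasure_eq_0_AE)
    qed (simp add: pdmp_kernel_def samples.emeasure_le_1)
  qed
  also have "\<dots> = emeasure \<mu> (A (c * exp (\<alpha> * t)))" using A_sets by simp
  finally show ?thesis by (simp add: A_def)
qed

lemma AE_invariant_fst_le_1:
  assumes inv: "pdmp_invariant \<alpha> \<beta> l0 l1 \<mu>" and "0 < \<alpha>" "0 < l0" "0 < l1"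
  shows "AE z in \<mu>. fst (fst z) \<le> 1"
proof -
  interpret prob_space \<mu> using inv by (simp add: pdmp_invariant_def)
  have sets_\<mu>: "sets \<mu> = sets (borel \<Otimes>\<^sub>M count_space {0, 1})"
    using inv by (simp add: pdmp_invariant_def)
  have "AE z in \<mu>. fst_excess (fst z) \<le> 0"
  proof (rule AE_le_0_if_superlevels_escape)
    show "(\<lambda>z. fst_excess (fst z)) \<in> borel_measurable \<mu>"
      unfolding measurable_cong_sets[OF sets_\<mu> refl] fst_excess_def by measurable
    fix c :: real and n :: nat assume "0 < c"
    define t where "t = real n / (c * \<alpha>)"
    have "real n = c * (\<alpha> * t)" using \<open>0 < c\<close> \<open>0 < \<alpha>\<close> by (simp add: t_def)
    also have "\<dots> \<le> c * exp (\<alpha> * t)"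
      using \<open>0 < c\<close> exp_ge_add_one_self[of "\<alpha> * t"] by (intro mult_left_mono) linarith+
    finally show "\<exists>c' \<ge> real n. emeasure \<mu> {z \<in> space \<mu>. c < fst_excess (fst z)}
        \<le> emeasure \<mu> {z \<in> space \<mu>. c' < fst_excess (fst z)}"
      using invariant_emeasure_fst_excess_le[OF inv, of t c] assms \<open>0 < c\<close>
      by (intro exI[of _ "c * exp (\<alpha> * t)"]) (auto simp: t_def)
  qed
  then show ?thesis by (rule eventually_mono) (simp add: fst_excess_def)
qed

section \<open>Visits of the wedge in mode 0\<close>

text \<open>The \<open>(n+1)\<close>-st jump is not required to come after \<open>t\<close>, so summing over \<open>n\<close> overcounts the
  visits of \<open>B \<times> {0}\<close>.\<close>
definition mode0_hit ::
    "real \<Rightarrow> real \<Rightarrow> real \<Rightarrow> real \<Rightarrow> (real \<times> real) set \<Rightarrow> nat \<Rightarrow> real \<Rightarrow> real \<times> real \<Rightarrow> nat \<Rightarrow> real stream \<Rightarrow> ennreal"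
  where
  "mode0_hit \<alpha> \<beta> l0 l1 B n t x i \<omega> =
    (if pdmp_jump_time l0 l1 i \<omega> n \<le> t \<and> pdmp_mode i n = 0 \<and>
        pdmp_flow \<alpha> \<beta> 0 (t - pdmp_jump_time l0 l1 i \<omega> n) (pdmp_pos \<alpha> \<beta> l0 l1 x i \<omega> n) \<in> B
     then 1 else 0)"

lemma measurable_mode0_hit [measurable (raw)]:
  assumes [measurable]: "B \<in> sets borel" "t \<in> borel_measurable N" "x \<in> borel_measurable N"
    and \<omega>: "\<omega> \<in> measurable N exp_samples"
  shows "(\<lambda>u. mode0_hit \<alpha> \<beta> l0 l1 B n (t u) (x u) i (\<omega> u)) \<in> borel_measurable N"
  using measurable_pdmp_jump_time[OF \<omega>] measurable_pdmp_pos[OF \<omega> assms(3)]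
  unfolding mode0_hit_def by measurable

lemma mode0_hit_Stream_Suc:
  "mode0_hit \<alpha> \<beta> l0 l1 B (Suc n) t x i (w ## \<omega>) =
   mode0_hit \<alpha> \<beta> l0 l1 B n (t - w / pdmp_rate l0 l1 (i mod 2))
     (pdmp_flow \<alpha> \<beta> (i mod 2) (w / pdmp_rate l0 l1 (i mod 2)) x) (Suc i) \<omega>"
  unfolding mode0_hit_def pdmp_jump_time_Stream_Suc pdmp_pos_Stream_Suc pdmp_mode_Suc
  by (simp add: algebra_simps)

text \<open>Before the first jump the process cannot be in the wedge in mode 0: there \<open>y\<^sub>1 \<le> exp (-\<alpha> t) < \<delta>\<close>.\<close>
lemma indicator_pdmp_state_le_suminf_mode0_hit:
  assumes "0 \<le> t" "fst x \<le> 1" "exp (- \<alpha> * t) < \<delta>" "0 < \<delta>" "B \<subseteq> wedge \<delta>"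
  shows "indicator (B \<times> {0}) (pdmp_state \<alpha> \<beta> l0 l1 t (x, i) \<omega>) \<le> (\<Sum>n. mode0_hit \<alpha> \<beta> l0 l1 B (Suc n) t x i \<omega>)"
proof (cases "pdmp_state \<alpha> \<beta> l0 l1 t (x, i) \<omega> \<in> B \<times> {0}")
  case True
  define k where "k = (LEAST k. t < pdmp_jump_time l0 l1 i \<omega> (Suc k))"
  have jump: "pdmp_jump_time l0 l1 i \<omega> k \<le> t"
    unfolding k_def by (rule pdmp_jump_time_Least_le[OF assms(1)])
  have mode: "pdmp_mode i k = 0"
    and flow: "pdmp_flow \<alpha> \<beta> 0 (t - pdmp_jump_time l0 l1 i \<omega> k) (pdmp_pos \<alpha> \<beta> l0 l1 x i \<omega> k) \<in> B"
    using True unfolding pdmp_state_eq Let_def k_def[symmetric] by auto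
  show ?thesis
  proof (cases k)
    case 0
    have "fst (pdmp_flow \<alpha> \<beta> 0 t x) = fst x * exp (- \<alpha> * t)" by (simp add: pdmp_flow_def)
    also have "\<dots> \<le> exp (- \<alpha> * t)"
      using assms(2) by (cases "0 \<le> fst x") (auto intro: mult_left_le_one_le order_trans[OF mult_nonpos_nonneg])
    finally have "fst (pdmp_flow \<alpha> \<beta> 0 t x) < \<delta>" using assms(3) by simp
    moreover have "pdmp_flow \<alpha> \<beta> 0 t x \<in> wedge \<delta>" using flow 0 assms(5) by auto
    ultimately show ?thesis using assms(4) by (simp add: wedge_def)
  next
    case (Suc m)
    then have "mode0_hit \<alpha> \<beta> l0 l1 B (Suc m) t x i \<omega> = 1"
      using jump mode flow by (simp add: mode0_hit_def)
    moreover have "mode0_hit \<alpha> \<beta> l0 l1 B (Suc m) t x i \<omega> \<le> (\<Sum>n. mode0_hit \<alpha> \<beta> l0 l1 B (Suc n) t x i \<omega>)"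
      using sum_le_suminf[of "\<lambda>n. mode0_hit \<alpha> \<beta> l0 l1 B (Suc n) t x i \<omega>" "{m}"] by (simp add: summableI)
    ultimately show ?thesis by (simp add: indicator_def)
  qed
qed simp

interpretation lborel_exp1: pair_sigma_finite lborel exp1_measure
  by (intro pair_sigma_finite.intro lborel.sigma_finite_measure_axioms exp1.sigma_finite_measure_axioms)

text \<open>The holding time in mode 1 has density at most \<open>l1\<close>.\<close>
lemma nn_integral_mode0_hit_first_le:
  assumes \<alpha>\<beta>: "0 < \<beta>" "\<beta> < \<alpha>" and \<delta>: "0 < \<delta>" "\<delta> \<le> 1" and l: "0 < l0" "0 < l1"
    and B[measurable]: "B \<in> sets borel" and B_sub: "B \<subseteq> wedge \<delta>" and x: "fst x \<le> 1"
  shows "(\<integral>\<^sup>+t. (\<integral>\<^sup>+\<omega>. mode0_hit \<alpha> \<beta> l0 l1 B 1 t x i \<omega> \<partial>exp_samples) \<partial>lborel)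
    \<le> ennreal (l1 / (\<alpha> * \<beta> * \<delta> ^ 3)) * emeasure lborel B"
proof (cases "i mod 2 = 1")
  case False
  then have "pdmp_mode i 1 \<noteq> 0" by (simp add: pdmp_mode_def) presburger
  then show ?thesis by (simp add: mode0_hit_def)
next
  case True
  have mode: "pdmp_mode (Suc i) 0 = 0"
    using True by (simp add: pdmp_mode_def mod_Suc)
  define h where "h t w = (if w / l1 \<le> t \<and> pdmp_flow \<alpha> \<beta> 0 (t - w / l1) (pdmp_flow \<alpha> \<beta> 1 (w / l1) x) \<in> B
      then 1 else (0 :: ennreal))" for t w
  define H where "H a = (\<integral>\<^sup>+b. indicator {0..} b * indicator B (pdmp_flow \<alpha> \<beta> 0 b (pdmp_flow \<alpha> \<beta> 1 a x)) \<partial>lborel)" for a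
  have [measurable]: "case_prod h \<in> borel_measurable (lborel \<Otimes>\<^sub>M exp1_measure)" "H \<in> borel_measurable borel"
    unfolding h_def H_def by measurable
  have first_jump: "mode0_hit \<alpha> \<beta> l0 l1 B (Suc 0) t x i (w ## \<omega>) = h t w" for t w \<omega>
    by (simp only: mode0_hit_Stream_Suc) (simp add: mode0_hit_def h_def mode True pdmp_rate_def)
  have "(\<integral>\<^sup>+t. (\<integral>\<^sup>+\<omega>. mode0_hit \<alpha> \<beta> l0 l1 B 1 t x i \<omega> \<partial>exp_samples) \<partial>lborel)
      = (\<integral>\<^sup>+t. (\<integral>\<^sup>+w. h t w \<partial>exp1_measure) \<partial>lborel)"
    by (intro nn_integral_cong, subst nn_integral_exp_samples_Stream, measurable)
       (simp add: first_jump samples.emeasure_space_1)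
  also have "\<dots> = (\<integral>\<^sup>+w. (\<integral>\<^sup>+t. h t w \<partial>lborel) \<partial>exp1_measure)"
    by (rule lborel_exp1.Fubini'[symmetric]) measurable
  also have "\<dots> = (\<integral>\<^sup>+w. H (w / l1) \<partial>exp1_measure)"
  proof (rule nn_integral_cong)
    fix w
    have "(\<lambda>t. h t w) \<in> borel_measurable borel" unfolding h_def by measurable
    from nn_integral_real_affine[OF this, of 1 "w / l1"]
    show "(\<integral>\<^sup>+t. h t w \<partial>lborel) = H (w / l1)"
      by (simp add: H_def h_def indicator_def) (auto intro!: nn_integral_cong)
  qed
  also have "\<dots> \<le> ennreal l1 * (\<integral>\<^sup>+a. indicator {0..} a * H a \<partial>lborel)"
    using l by (intro nn_integral_exp1_measure_div_le) auto
  also have "\<dots> \<le> ennreal l1 * (ennreal (1 / (\<alpha> * \<beta> * \<delta> ^ 3)) * emeasure lborel B)"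
    unfolding H_def using \<alpha>\<beta> \<delta> B_sub x by (intro mult_left_mono nn_integral_switch_flow_le) auto
  also have "\<dots> = ennreal (l1 / (\<alpha> * \<beta> * \<delta> ^ 3)) * emeasure lborel B"
    using l \<alpha>\<beta> \<delta> by (simp add: mult.assoc[symmetric] ennreal_mult[symmetric])
  finally show ?thesis .
qed

lemma nn_integral_window_mode0_hit_first_le:
  assumes \<alpha>\<beta>: "0 < \<beta>" "\<beta> < \<alpha>" and \<delta>: "0 < \<delta>" "\<delta> \<le> 1" and l: "0 < l0" "0 < l1"
    and B[measurable]: "B \<in> sets borel" and B_sub: "B \<subseteq> wedge \<delta>" and x: "fst x \<le> 1"
  shows "(\<integral>\<^sup>+t. indicator {s..s+1} t * (\<integral>\<^sup>+\<omega>. mode0_hit \<alpha> \<beta> l0 l1 B 1 t x i \<omega> \<partial>exp_samples) \<partial>lborel)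
    \<le> ennreal (l1 / (\<alpha> * \<beta> * \<delta> ^ 3)) * emeasure lborel B * ennreal (exp (s + 1))"
proof (cases "0 \<le> s + 1")
  case True
  define C where "C = ennreal (l1 / (\<alpha> * \<beta> * \<delta> ^ 3)) * emeasure lborel B"
  have "(\<integral>\<^sup>+t. indicator {s..s+1} t * (\<integral>\<^sup>+\<omega>. mode0_hit \<alpha> \<beta> l0 l1 B 1 t x i \<omega> \<partial>exp_samples) \<partial>lborel)
      \<le> (\<integral>\<^sup>+t. (\<integral>\<^sup>+\<omega>. mode0_hit \<alpha> \<beta> l0 l1 B 1 t x i \<omega> \<partial>exp_samples) \<partial>lborel)"
    by (intro nn_integral_mono) (simp add: indicator_def)
  also have "\<dots> \<le> C * ennreal 1"
    unfolding C_def using nn_integral_mode0_hit_first_le[OF \<alpha>\<beta> \<delta> l B B_sub x] by simp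
  also have "\<dots> \<le> C * ennreal (exp (s + 1))"
    using True by (intro mult_left_mono ennreal_leI) auto
  finally show ?thesis by (simp add: C_def)
next
  case False
  have "AE \<omega> in exp_samples. mode0_hit \<alpha> \<beta> l0 l1 B 1 t x i \<omega> = 0" if "t \<le> s + 1" for t
    using AE_exp_samples_nonneg pdmp_jump_time_nonneg[OF l] False that
    by (auto elim!: eventually_mono simp: mode0_hit_def) (smt (verit))
  then have "(\<integral>\<^sup>+\<omega>. mode0_hit \<alpha> \<beta> l0 l1 B 1 t x i \<omega> \<partial>exp_samples) = 0" if "t \<le> s + 1" for t
    using that by (simp add: nn_integral_0_iff_AE)
  then have "(\<integral>\<^sup>+t. indicator {s..s+1} t * (\<integral>\<^sup>+\<omega>. mode0_hit \<alpha> \<beta> l0 l1 B 1 t x i \<omega> \<partial>exp_samples) \<partial>lborel)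
      = (\<integral>\<^sup>+t. 0 \<partial>(lborel :: real measure))"
    by (intro nn_integral_cong) (simp add: indicator_def)
  then show ?thesis by simp
qed

text \<open>The strong Markov property at the first jump.\<close>
lemma nn_integral_window_mode0_hit_Suc:
  fixes l0 l1 r :: real and i :: nat
  defines "r \<equiv> pdmp_rate l0 l1 (i mod 2)"
  assumes l: "0 < l0" "0 < l1" and B[measurable]: "B \<in> sets borel"
  shows "(\<integral>\<^sup>+t. indicator {s..s+1} t * (\<integral>\<^sup>+\<omega>. mode0_hit \<alpha> \<beta> l0 l1 B (Suc n) t x i \<omega> \<partial>exp_samples) \<partial>lborel)
    = (\<integral>\<^sup>+w. (\<integral>\<^sup>+\<tau>. indicator {s - w / r..s - w / r + 1} \<tau> *
        (\<integral>\<^sup>+\<omega>. mode0_hit \<alpha> \<beta> l0 l1 B n \<tau> (pdmp_flow \<alpha> \<beta> (i mod 2) (w / r) x) (Suc i) \<omega> \<partial>exp_samples)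
        \<partial>lborel) \<partial>exp1_measure)"
proof -
  have r: "0 < r" using pdmp_rate_pos[OF l] by (simp add: r_def)
  define \<Phi> where "\<Phi> \<tau> w = (\<integral>\<^sup>+\<omega>. mode0_hit \<alpha> \<beta> l0 l1 B n \<tau> (pdmp_flow \<alpha> \<beta> (i mod 2) (w / r) x) (Suc i) \<omega> \<partial>exp_samples)"
    for \<tau> w
  have [measurable]: "(\<lambda>(t, w). indicator {s..s+1} t * \<Phi> (t - w / r) w) \<in> borel_measurable (lborel \<Otimes>\<^sub>M exp1_measure)"
    and shift_measurable: "(\<lambda>t. indicator {s..s+1} t * \<Phi> (t - w / r) w) \<in> borel_measurable borel" for w
    unfolding \<Phi>_def by measurable
  have "(\<integral>\<^sup>+t. indicator {s..s+1} t * (\<integral>\<^sup>+\<omega>. mode0_hit \<alpha> \<beta> l0 l1 B (Suc n) t x i \<omega> \<partial>exp_samples) \<partial>lborel)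
      = (\<integral>\<^sup>+t. (\<integral>\<^sup>+w. indicator {s..s+1} t * \<Phi> (t - w / r) w \<partial>exp1_measure) \<partial>lborel)"
    by (intro nn_integral_cong, subst nn_integral_exp_samples_Stream, measurable)
       (simp only: mode0_hit_Stream_Suc \<Phi>_def r_def, rule nn_integral_cmult[symmetric], measurable)
  also have "\<dots> = (\<integral>\<^sup>+w. (\<integral>\<^sup>+t. indicator {s..s+1} t * \<Phi> (t - w / r) w \<partial>lborel) \<partial>exp1_measure)"
    by (rule lborel_exp1.Fubini'[symmetric]) measurable
  also have "\<dots> = (\<integral>\<^sup>+w. (\<integral>\<^sup>+\<tau>. indicator {s - w / r..s - w / r + 1} \<tau> * \<Phi> \<tau> w \<partial>lborel) \<partial>exp1_measure)"
  proof (rule nn_integral_cong)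
    fix w
    show "(\<integral>\<^sup>+t. indicator {s..s+1} t * \<Phi> (t - w / r) w \<partial>lborel)
        = (\<integral>\<^sup>+\<tau>. indicator {s - w / r..s - w / r + 1} \<tau> * \<Phi> \<tau> w \<partial>lborel)"
      using nn_integral_real_affine[OF shift_measurable[of w], of 1 "w / r"]
      by (simp add: indicator_def algebra_simps)
  qed
  finally show ?thesis by (simp add: \<Phi>_def)
qed

lemma nn_integral_mode0_hit_le:
  assumes \<alpha>\<beta>: "0 < \<beta>" "\<beta> < \<alpha>" and \<delta>: "0 < \<delta>" "\<delta> \<le> 1" and l: "0 < l0" "0 < l1"
    and B[measurable]: "B \<in> sets borel" and B_sub: "B \<subseteq> wedge \<delta>"
  shows "fst x \<le> 1 \<Longrightarrow>
    (\<integral>\<^sup>+t. indicator {s..s+1} t * (\<integral>\<^sup>+\<omega>. mode0_hit \<alpha> \<beta> l0 l1 B (Suc n) t x i \<omega> \<partial>exp_samples) \<partial>lborel)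
    \<le> ennreal (l1 / (\<alpha> * \<beta> * \<delta> ^ 3)) * emeasure lborel B *
       (\<integral>\<^sup>+\<omega>. ennreal (exp (s + 1 - pdmp_jump_time l0 l1 i \<omega> n)) \<partial>exp_samples)"
proof (induction n arbitrary: x i s)
  case 0
  then show ?case
    using nn_integral_window_mode0_hit_first_le[OF \<alpha>\<beta> \<delta> l B B_sub, of x s i]
    by (simp add: samples.emeasure_space_1)
next
  case (Suc n)
  define C where "C = ennreal (l1 / (\<alpha> * \<beta> * \<delta> ^ 3)) * emeasure lborel B"
  define r where "r = pdmp_rate l0 l1 (i mod 2)"
  define x' where "x' w = pdmp_flow \<alpha> \<beta> (i mod 2) (w / r) x" for w
  have r: "0 < r" using pdmp_rate_pos[OF l] by (simp add: r_def)
  have "(\<integral>\<^sup>+t. indicator {s..s+1} t * (\<integral>\<^sup>+\<omega>. mode0_hit \<alpha> \<beta> l0 l1 B (Suc (Suc n)) t x i \<omega> \<partial>exp_samples) \<partial>lborel)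
      = (\<integral>\<^sup>+w. (\<integral>\<^sup>+\<tau>. indicator {s - w / r..s - w / r + 1} \<tau> *
          (\<integral>\<^sup>+\<omega>. mode0_hit \<alpha> \<beta> l0 l1 B (Suc n) \<tau> (x' w) (Suc i) \<omega> \<partial>exp_samples) \<partial>lborel) \<partial>exp1_measure)"
    unfolding r_def x'_def by (rule nn_integral_window_mode0_hit_Suc[OF l B])
  also have "\<dots> \<le> (\<integral>\<^sup>+w. C * (\<integral>\<^sup>+\<omega>. ennreal (exp (s - w / r + 1 - pdmp_jump_time l0 l1 (Suc i) \<omega> n)) \<partial>exp_samples)
      \<partial>exp1_measure)"
    using AE_exp1_measure_nonneg
  proof (intro nn_integral_mono_AE, elim eventually_mono)
    fix w :: real assume "0 \<le> w"
    then have "fst (x' w) \<le> 1" unfolding x'_def using r \<alpha>\<beta> Suc.prems by (intro fst_pdmp_flow_le_1) auto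
    then show "(\<integral>\<^sup>+\<tau>. indicator {s - w / r..s - w / r + 1} \<tau> *
          (\<integral>\<^sup>+\<omega>. mode0_hit \<alpha> \<beta> l0 l1 B (Suc n) \<tau> (x' w) (Suc i) \<omega> \<partial>exp_samples) \<partial>lborel)
        \<le> C * (\<integral>\<^sup>+\<omega>. ennreal (exp (s - w / r + 1 - pdmp_jump_time l0 l1 (Suc i) \<omega> n)) \<partial>exp_samples)"
      unfolding C_def by (rule Suc.IH)
  qed
  also have "\<dots> = C * (\<integral>\<^sup>+w. (\<integral>\<^sup>+\<omega>. ennreal (exp (s + 1 - pdmp_jump_time l0 l1 i (w ## \<omega>) (Suc n))) \<partial>exp_samples)
      \<partial>exp1_measure)"
    by (subst nn_integral_cmult[symmetric], measurable)
       (simp add: pdmp_jump_time_Stream_Suc r_def algebra_simps)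
  also have "\<dots> = C * (\<integral>\<^sup>+\<omega>. ennreal (exp (s + 1 - pdmp_jump_time l0 l1 i \<omega> (Suc n))) \<partial>exp_samples)"
    by (subst nn_integral_exp_samples_Stream) measurable
  finally show ?case by (simp add: C_def)
qed

lemma nn_integral_suminf_mode0_hit_le:
  assumes \<alpha>\<beta>: "0 < \<beta>" "\<beta> < \<alpha>" and \<delta>: "0 < \<delta>" "\<delta> \<le> 1" and l: "0 < l0" "0 < l1"
    and B[measurable]: "B \<in> sets borel" and B_sub: "B \<subseteq> wedge \<delta>" and x: "fst x \<le> 1"
  shows "(\<integral>\<^sup>+t. indicator {s..s+1} t * (\<Sum>n. \<integral>\<^sup>+\<omega>. mode0_hit \<alpha> \<beta> l0 l1 B (Suc n) t x i \<omega> \<partial>exp_samples) \<partial>lborel)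
    \<le> ennreal (l1 / (\<alpha> * \<beta> * \<delta> ^ 3) * exp (s + 1) / (1 - laplace_factor l0 l1)) * emeasure lborel B"
proof -
  define C where "C = ennreal (l1 / (\<alpha> * \<beta> * \<delta> ^ 3)) * emeasure lborel B"
  define \<rho> where "\<rho> = laplace_factor l0 l1"
  have \<rho>: "0 < \<rho>" "\<rho> < 1" using laplace_factor_bounds[OF l] by (auto simp: \<rho>_def)
  have "(\<integral>\<^sup>+t. indicator {s..s+1} t * (\<Sum>n. \<integral>\<^sup>+\<omega>. mode0_hit \<alpha> \<beta> l0 l1 B (Suc n) t x i \<omega> \<partial>exp_samples) \<partial>lborel)
      = (\<Sum>n. \<integral>\<^sup>+t. indicator {s..s+1} t * (\<integral>\<^sup>+\<omega>. mode0_hit \<alpha> \<beta> l0 l1 B (Suc n) t x i \<omega> \<partial>exp_samples) \<partial>lborel)"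
  proof -
    have "(\<lambda>t. \<integral>\<^sup>+\<omega>. mode0_hit \<alpha> \<beta> l0 l1 B (Suc n) t x i \<omega> \<partial>exp_samples) \<in> borel_measurable borel" for n
      by (rule samples.borel_measurable_nn_integral) measurable
    then show ?thesis
      by (simp only: ennreal_suminf_cmult[symmetric]) (rule nn_integral_suminf, measurable)
  qed
  also have "\<dots> \<le> (\<Sum>n. C * (ennreal (exp (s + 1)) * ennreal (\<rho> ^ n)))"
  proof (intro suminf_le summableI)
    fix n
    have "(\<integral>\<^sup>+\<omega>. ennreal (exp (s + 1 - pdmp_jump_time l0 l1 i \<omega> n)) \<partial>exp_samples)
        = ennreal (exp (s + 1)) * (\<integral>\<^sup>+\<omega>. ennreal (exp (- pdmp_jump_time l0 l1 i \<omega> n)) \<partial>exp_samples)"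
      by (subst nn_integral_cmult[symmetric], measurable)
         (simp add: ennreal_mult[symmetric] exp_diff exp_minus divide_inverse)
    also have "\<dots> \<le> ennreal (exp (s + 1)) * ennreal (\<rho> ^ n)"
      unfolding \<rho>_def by (intro mult_left_mono nn_integral_exp_neg_pdmp_jump_time_le l) auto
    finally show "(\<integral>\<^sup>+t. indicator {s..s+1} t * (\<integral>\<^sup>+\<omega>. mode0_hit \<alpha> \<beta> l0 l1 B (Suc n) t x i \<omega> \<partial>exp_samples) \<partial>lborel)
        \<le> C * (ennreal (exp (s + 1)) * ennreal (\<rho> ^ n))"
      using nn_integral_mode0_hit_le[OF \<alpha>\<beta> \<delta> l B B_sub x, of s n i] unfolding C_def
      by (elim order_trans) (simp add: mult_left_mono)
  qed
  also have "\<dots> = C * ennreal (exp (s + 1)) * ennreal (1 / (1 - \<rho>))"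
    using \<rho> by (simp add: mult.assoc suminf_ennreal2 summable_geometric suminf_geometric)
  also have "\<dots> = ennreal (l1 / (\<alpha> * \<beta> * \<delta> ^ 3) * exp (s + 1) / (1 - \<rho>)) * emeasure lborel B"
    using \<alpha>\<beta> \<delta> l \<rho> by (simp add: C_def ennreal_mult[symmetric] mult_ac)
  finally show ?thesis by (simp add: \<rho>_def)
qed

lemma pdmp_kernel_mode0_le_suminf:
  assumes "0 \<le> t" "fst x \<le> 1" "exp (- \<alpha> * t) < \<delta>" "0 < \<delta>"
    and B[measurable]: "B \<in> sets borel" and B_sub: "B \<subseteq> wedge \<delta>"
  shows "pdmp_kernel \<alpha> \<beta> l0 l1 t (x, i) (B \<times> {0})
    \<le> (\<Sum>n. \<integral>\<^sup>+\<omega>. mode0_hit \<alpha> \<beta> l0 l1 B (Suc n) t x i \<omega> \<partial>exp_samples)"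
proof -
  let ?X = "{\<omega> \<in> space exp_samples. pdmp_state \<alpha> \<beta> l0 l1 t (x, i) \<omega> \<in> B \<times> {0}}"
  show ?thesis
  proof (cases "?X \<in> sets exp_samples")
    case True
    have "pdmp_kernel \<alpha> \<beta> l0 l1 t (x, i) (B \<times> {0}) = (\<integral>\<^sup>+\<omega>. indicator ?X \<omega> \<partial>exp_samples)"
      unfolding pdmp_kernel_def using True by simp
    also have "\<dots> \<le> (\<integral>\<^sup>+\<omega>. (\<Sum>n. mode0_hit \<alpha> \<beta> l0 l1 B (Suc n) t x i \<omega>) \<partial>exp_samples)"
      using indicator_pdmp_state_le_suminf_mode0_hit[OF assms(1-4) B_sub]
      by (intro nn_integral_mono) (simp add: indicator_def split: if_split_asm)
    also have "\<dots> = (\<Sum>n. \<integral>\<^sup>+\<omega>. mode0_hit \<alpha> \<beta> l0 l1 B (Suc n) t x i \<omega> \<partial>exp_samples)"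
      by (rule nn_integral_suminf) measurable
    finally show ?thesis .
  qed (simp add: pdmp_kernel_def emeasure_notin_sets)
qed

lemma measurable_suminf_mode0_hit:
  assumes sets_M: "sets M = sets (borel \<Otimes>\<^sub>M count_space {0, 1})" and [measurable]: "B \<in> sets borel"
  shows "(\<lambda>(t, z). \<Sum>n. \<integral>\<^sup>+\<omega>. mode0_hit \<alpha> \<beta> l0 l1 B (Suc n) t (fst z) (snd z) \<omega> \<partial>exp_samples)
    \<in> borel_measurable (lborel \<Otimes>\<^sub>M M)"
proof -
  have [measurable]: "fst \<in> measurable M borel" "snd \<in> measurable M (count_space {0, 1})"
    by (simp_all add: measurable_cong_sets[OF sets_M refl])
  have "(\<lambda>u. mode0_hit \<alpha> \<beta> l0 l1 B (Suc n) (fst (fst u)) (fst (snd (fst u))) (snd (snd (fst u))) (snd u))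
      \<in> borel_measurable ((lborel \<Otimes>\<^sub>M M) \<Otimes>\<^sub>M exp_samples)" for n
    by (rule measurable_compose_countable'[where I = "{0, 1}" and g = "\<lambda>u. snd (snd (fst u))"]) measurable
  then have "(\<lambda>tz. \<integral>\<^sup>+\<omega>. mode0_hit \<alpha> \<beta> l0 l1 B (Suc n) (fst tz) (fst (snd tz)) (snd (snd tz)) \<omega> \<partial>exp_samples)
      \<in> borel_measurable (lborel \<Otimes>\<^sub>M M)" for n
    by (intro samples.borel_measurable_nn_integral) (simp add: case_prod_beta')
  then show ?thesis unfolding case_prod_beta' by measurable
qed

lemma invariant_emeasure_mode0_le_nn_integral:
  assumes \<alpha>: "0 < \<alpha>" and l: "0 < l0" "0 < l1" and inv: "pdmp_invariant \<alpha> \<beta> l0 l1 \<mu>"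
    and B[measurable]: "B \<in> sets borel" and B_sub: "B \<subseteq> wedge \<delta>"
    and t: "0 \<le> t" "exp (- \<alpha> * t) < \<delta>" and "0 < \<delta>"
  shows "emeasure \<mu> (B \<times> {0})
    \<le> (\<integral>\<^sup>+z. (\<Sum>n. \<integral>\<^sup>+\<omega>. mode0_hit \<alpha> \<beta> l0 l1 B (Suc n) t (fst z) (snd z) \<omega> \<partial>exp_samples) \<partial>\<mu>)"
proof -
  have "B \<times> {0} \<in> sets \<mu>"
    using inv unfolding pdmp_invariant_def by (auto intro!: pair_measureI)
  then have "emeasure \<mu> (B \<times> {0}) = (\<integral>\<^sup>+z. pdmp_kernel \<alpha> \<beta> l0 l1 t z (B \<times> {0}) \<partial>\<mu>)"
    using inv t(1) unfolding pdmp_invariant_def by blast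
  also have "\<dots> \<le> (\<integral>\<^sup>+z. (\<Sum>n. \<integral>\<^sup>+\<omega>. mode0_hit \<alpha> \<beta> l0 l1 B (Suc n) t (fst z) (snd z) \<omega> \<partial>exp_samples) \<partial>\<mu>)"
    using AE_invariant_fst_le_1[OF inv \<alpha> l]
  proof (intro nn_integral_mono_AE, elim eventually_mono)
    fix z :: "(real \<times> real) \<times> nat" assume "fst (fst z) \<le> 1"
    then show "pdmp_kernel \<alpha> \<beta> l0 l1 t z (B \<times> {0})
        \<le> (\<Sum>n. \<integral>\<^sup>+\<omega>. mode0_hit \<alpha> \<beta> l0 l1 B (Suc n) t (fst z) (snd z) \<omega> \<partial>exp_samples)"
      using pdmp_kernel_mode0_le_suminf[OF t(1) _ t(2) \<open>0 < \<delta>\<close> B B_sub] by (cases z) simp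
  qed
  finally show ?thesis .
qed

lemma invariant_emeasure_mode0_le:
  assumes \<alpha>\<beta>: "0 < \<beta>" "\<beta> < \<alpha>" and \<delta>: "0 < \<delta>" "\<delta> \<le> 1" and l: "0 < l0" "0 < l1"
    and inv: "pdmp_invariant \<alpha> \<beta> l0 l1 \<mu>"
    and B[measurable]: "B \<in> sets borel" and B_sub: "B \<subseteq> wedge \<delta>"
    and s: "0 \<le> s" "exp (- \<alpha> * s) < \<delta>"
  shows "emeasure \<mu> (B \<times> {0})
    \<le> ennreal (l1 / (\<alpha> * \<beta> * \<delta> ^ 3) * exp (s + 1) / (1 - laplace_factor l0 l1)) * emeasure lborel B"
proof -
  have \<alpha>: "0 < \<alpha>" using \<alpha>\<beta> by simp
  interpret \<mu>: prob_space \<mu> using inv by (simp add: pdmp_invariant_def)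
  interpret lborel_\<mu>: pair_sigma_finite lborel \<mu>
    by (intro pair_sigma_finite.intro lborel.sigma_finite_measure_axioms \<mu>.sigma_finite_measure_axioms)
  define c where "c = ennreal (l1 / (\<alpha> * \<beta> * \<delta> ^ 3) * exp (s + 1) / (1 - laplace_factor l0 l1)) * emeasure lborel B"
  define Q where "Q t z = (\<Sum>n. \<integral>\<^sup>+\<omega>. mode0_hit \<alpha> \<beta> l0 l1 B (Suc n) t (fst z) (snd z) \<omega> \<partial>exp_samples)" for t z
  have Q_measurable[measurable]: "(\<lambda>(t, z). Q t z) \<in> borel_measurable (lborel \<Otimes>\<^sub>M \<mu>)"
    unfolding Q_def using inv by (intro measurable_suminf_mode0_hit B) (simp add: pdmp_invariant_def)
  have at_t: "emeasure \<mu> (B \<times> {0}) \<le> (\<integral>\<^sup>+z. Q t z \<partial>\<mu>)" if "t \<in> {s..s+1}" for t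
  proof -
    have "\<alpha> * s \<le> \<alpha> * t" using that \<alpha> by (intro mult_left_mono) auto
    then have "exp (- \<alpha> * t) \<le> exp (- \<alpha> * s)" by simp
    then have "exp (- \<alpha> * t) < \<delta>" using s(2) by linarith
    then show ?thesis unfolding Q_def using that s \<delta>
      by (intro invariant_emeasure_mode0_le_nn_integral[OF \<alpha> l inv B B_sub]) auto
  qed
  have "emeasure \<mu> (B \<times> {0}) = (\<integral>\<^sup>+t. indicator {s..s+1} t * emeasure \<mu> (B \<times> {0}) \<partial>lborel)"
    by (subst nn_integral_multc) auto
  also have "\<dots> \<le> (\<integral>\<^sup>+t. (\<integral>\<^sup>+z. indicator {s..s+1} t * Q t z \<partial>\<mu>) \<partial>lborel)"
    using measurable_Pair2[OF Q_measurable]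
    by (intro nn_integral_mono) (auto simp: indicator_def nn_integral_cmult intro: at_t)
  also have "\<dots> = (\<integral>\<^sup>+z. (\<integral>\<^sup>+t. indicator {s..s+1} t * Q t z \<partial>lborel) \<partial>\<mu>)"
    by (rule lborel_\<mu>.Fubini'[symmetric]) measurable
  also have "\<dots> \<le> (\<integral>\<^sup>+z. c \<partial>\<mu>)"
    using AE_invariant_fst_le_1[OF inv \<alpha> l]
  proof (intro nn_integral_mono_AE, elim eventually_mono)
    fix z :: "(real \<times> real) \<times> nat" assume "fst (fst z) \<le> 1"
    then show "(\<integral>\<^sup>+t. indicator {s..s+1} t * Q t z \<partial>lborel) \<le> c"
      unfolding Q_def c_def by (rule nn_integral_suminf_mode0_hit_le[OF \<alpha>\<beta> \<delta> l B B_sub])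
  qed
  also have "\<dots> = c" by (simp add: \<mu>.emeasure_space_1)
  finally show ?thesis by (simp add: c_def)
qed

lemma invariant_emeasure_mode0_le_lborel:
  assumes \<alpha>\<beta>: "0 < \<beta>" "\<beta> < \<alpha>" and \<delta>: "0 < \<delta>" "\<delta> \<le> 1" and l: "0 < l0" "0 < l1"
    and inv: "pdmp_invariant \<alpha> \<beta> l0 l1 \<mu>"
  obtains c where "0 \<le> c"
    "\<And>B. B \<in> sets borel \<Longrightarrow> B \<subseteq> wedge \<delta> \<Longrightarrow> emeasure \<mu> (B \<times> {0}) \<le> ennreal c * emeasure lborel B"
proof
  define s where "s = (1 - ln \<delta>) / \<alpha>"
  have "ln \<delta> \<le> 0" using \<delta> by simp
  then have "0 \<le> s" using \<alpha>\<beta> by (simp add: s_def)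
  moreover have "exp (- \<alpha> * s) < \<delta>"
  proof -
    have "\<delta> * 1 < \<delta> * exp 1" using \<delta> by (intro mult_strict_left_mono) auto
    then show ?thesis using \<delta> \<alpha>\<beta> by (simp add: s_def exp_diff divide_less_eq)
  qed
  ultimately show "emeasure \<mu> (B \<times> {0})
      \<le> ennreal (l1 / (\<alpha> * \<beta> * \<delta> ^ 3) * exp (s + 1) / (1 - laplace_factor l0 l1)) * emeasure lborel B"
    if "B \<in> sets borel" "B \<subseteq> wedge \<delta>" for B
    using invariant_emeasure_mode0_le[OF \<alpha>\<beta> \<delta> l inv that] by blast
  show "0 \<le> l1 / (\<alpha> * \<beta> * \<delta> ^ 3) * exp (s + 1) / (1 - laplace_factor l0 l1)"
    using laplace_factor_bounds[OF l] \<alpha>\<beta> \<delta> l by simp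
qed

section \<open>Compact subsets of \<open>\<Gamma>\<^sub>r \<union> \<partial>\<Gamma>\<^sub>1\<close>\<close>

lemma Gamma_r_Un_boundary_Gamma1_subset:
  assumes "0 < \<beta>" "\<beta> < \<alpha>"
  shows "Gamma_r \<alpha> \<beta> \<union> boundary_Gamma1 \<alpha> \<beta> \<subseteq> {y. 0 < snd y \<and> snd y < fst y \<and> fst y \<le> 1}"
proof
  fix y assume "y \<in> Gamma_r \<alpha> \<beta> \<union> boundary_Gamma1 \<alpha> \<beta>"
  then show "y \<in> {y. 0 < snd y \<and> snd y < fst y \<and> fst y \<le> 1}"
  proof
    assume "y \<in> Gamma_r \<alpha> \<beta>"
    then have interior: "y \<in> interior (Gamma \<alpha> \<beta>)" and "snd y < fst y" by (auto simp: Gamma_r_def)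
    obtain e where e: "0 < e" "ball y e \<subseteq> Gamma \<alpha> \<beta>" using interior by (auto simp: mem_interior)
    have "(fst y, snd y - e / 2) \<in> ball y e"
      using e by (cases y) (simp add: dist_Pair_Pair dist_real_def)
    then have "0 \<le> snd y - e / 2" using e by (auto simp: Gamma_def)
    moreover have "fst y \<le> 1 - (1 - snd y) powr (\<alpha> / \<beta>)"
      using interior interior_subset by (cases y) (auto simp: Gamma_def)
    moreover have "0 \<le> (1 - snd y) powr (\<alpha> / \<beta>)" by simp
    ultimately have "0 < snd y" "fst y \<le> 1" using e by linarith+
    then show ?thesis using \<open>snd y < fst y\<close> by simp
  next
    assume "y \<in> boundary_Gamma1 \<alpha> \<beta>"
    then obtain t where "0 < t" "y = (1 - exp (- \<alpha> * t), 1 - exp (- \<beta> * t))"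
      by (auto simp: boundary_Gamma1_def pdmp_flow_def)
    moreover have "exp (- \<beta> * t) < 1" "exp (- \<alpha> * t) < exp (- \<beta> * t)"
      using \<open>0 < t\<close> assms by simp_all
    ultimately show ?thesis by simp
  qed
qed

lemma compact_subset_wedge:
  assumes "compact K" "K \<subseteq> {y. 0 < snd y \<and> snd y < fst y \<and> fst y \<le> 1}"
  obtains \<delta> where "0 < \<delta>" "\<delta> \<le> 1" "K \<subseteq> wedge \<delta>"
proof (cases "K = {}")
  case False
  define f where "f y = min (snd y) (fst y - snd y)" for y :: "real \<times> real"
  have "continuous_on K f" unfolding f_def by (intro continuous_intros)
  then obtain m where m: "m \<in> f ` K" "\<forall>v \<in> f ` K. m \<le> v"
    using compact_attains_inf[of "f ` K"] compact_continuous_image[of K f] assms(1) False by blast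
  have "0 < m" using m(1) assms(2) by (auto simp: f_def)
  moreover have "K \<subseteq> wedge (min m 1)"
    using m(2) assms(2) by (force simp: wedge_def f_def)
  ultimately show ?thesis by (intro that[of "min m 1"]) auto
qed (auto intro: that[of 1])

theorem proposition7p2:
  fixes \<alpha> \<beta> l0 l1 :: real
    and \<mu> :: "((real \<times> real) \<times> nat) measure"
    and rho0 :: "real \<times> real \<Rightarrow> real"
    and K :: "(real \<times> real) set"
  assumes "\<alpha> > \<beta>" "\<beta> > 0" "l0 > 0" "l1 > 0"
    and "pdmp_invariant \<alpha> \<beta> l0 l1 \<mu>"
    and "is_density0 \<mu> rho0"
    and "compact K"
    and "K \<subseteq> Gamma_r \<alpha> \<beta> \<union> boundary_Gamma1 \<alpha> \<beta>"
  shows "\<exists>C. AE x in lborel. x \<in> K \<longrightarrow> rho0 x \<le> C"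
proof -
  obtain \<delta> where \<delta>: "0 < \<delta>" "\<delta> \<le> 1" and K_wedge: "K \<subseteq> wedge \<delta>"
    using compact_subset_wedge[OF assms(7)] assms(8) Gamma_r_Un_boundary_Gamma1_subset[OF assms(2,1)] by blast
  obtain c where "0 \<le> c"
    and mode0_le: "\<And>B. B \<in> sets borel \<Longrightarrow> B \<subseteq> wedge \<delta> \<Longrightarrow> emeasure \<mu> (B \<times> {0}) \<le> ennreal c * emeasure lborel B"
    using invariant_emeasure_mode0_le_lborel[OF assms(2,1) \<delta> assms(3-5)] by blast
  have "AE x in lborel. x \<in> K \<longrightarrow> rho0 x \<le> c + 1"
  proof (rule AE_density_le_of_emeasure_le)
    show "rho0 \<in> borel_measurable lborel" using assms(6) by (simp add: is_density0_def)
    show "K \<in> sets lborel" using assms(7) by (simp add: borel_compact)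
    show "emeasure lborel K < \<infinity>" using emeasure_bounded_finite[OF compact_imp_bounded[OF assms(7)]] .
    show "(\<integral>\<^sup>+x\<in>B. ennreal (rho0 x) \<partial>lborel) \<le> ennreal c * emeasure lborel B"
      if "B \<in> sets lborel" "B \<subseteq> K" for B
      using mode0_le[of B] that K_wedge assms(6) by (auto simp: is_density0_def)
  qed fact
  then show ?thesis by blast
qed

end
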